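(* Let $D_K$ be a relative $K$-entropy satisfying Properties (a), (b), (c) and (d) below, and let $H_K$ be the associated conditional entropy, defined by one of the two forms below. Then for every POVM $X=\{X_j\}$ on $\mathcal{H}_A$ and every density operator $\rho_{AB}$, $H_K(X|B)\ge0$, with equality if the operators $\mathrm{Tr}_A(X_j\rho_{AB})$ (for the different $j$) have mutually orthogonal supports.
   Context: All Hilbert spaces are finite-dimensional; $\log$ has an arbitrary but fixed base. A relative $K$-entropy $D_K$ assigns to every pair $(S,T)$ of positive semidefinite operators on a common Hilbert space an extended real number $D_K(S\|T)$. Properties: (a) for every trace-preserving completely positive map $\mathcal{E}$ (possibly between different spaces), $D_K(\mathcal{E}(S)\|\mathcal{E}(T))\le D_K(S\|T)$; (b) for positive semidefinite $S,T$ on $\mathcal{H}$ and $T'$ on $\mathcal{H}'$, $D_K(S\oplus 0\,\|\,T\oplus T')=D_K(S\|T)$; (c) for every constant $c>0$, $D_K(S\|cT)=D_K(S\|T)+\log\frac1c$; (d) $D_K(\rho\|\rho)=0$ for every density operator $\rho$. The conditional $K$-entropy of a density operator $\rho_{AB}$ is either $H_K(A|B)=-D_K(\rho_{AB}\|\mathbb{1}_A\otimes\rho_B)$ for all $\rho_{AB}$, or $H_K(A|B)=\max_{\sigma_B}[-D_K(\rho_{AB}\|\mathbb{1}_A\otimes\sigma_B)]$ for all $\rho_{AB}$, maximum over density operators $\sigma_B$. For a POVM $X=\{X_j\}$ on $\mathcal{H}_A$ ($X_j\ge0$, $\sum_jX_j=\mathbb{1}$), let $\mathcal{X}:\rho_A\mapsto\sum_j|j\rangle\langle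 j|_X\,\mathrm{Tr}(X_j\rho_A)$ with $\{|j\rangle\}$ orthonormal in a register $\mathcal{H}_X$; $H_K(X|B)$ denotes $H_K$ of the state $(\mathcal{X}\otimes\mathcal{I})(\rho_{AB})$ (register $X$ given $B$). *)

theory Defs
  imports Complex_Main "HOL-Library.Extended_Real" "Jordan_Normal_Form.Matrix"
begin

text \<open>Operators on the Hilbert space C^n are complex n x n matrices.
  Bipartite spaces H_A (x) H_B are C^(dA*dB) with index (a,b) stored at a*dB+b.\<close>

definition mtrace :: "complex mat \<Rightarrow> complex" where
  "mtrace M = (\<Sum>i<dim_row M. M $$ (i,i))"

definition psd :: "nat \<Rightarrow> complex mat \<Rightarrow> bool" where
  "psd n M \<longleftrightarrow> M \<in> carrier_mat n n \<and>
     (\<forall>v \<in> carrier_vec n. Im ((M *\<^sub>v v) \<bullet>c v) = 0 \<and> Re ((M *\<^sub>v v) \<bullet>c v) \<ge> 0)"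

definition density :: "nat \<Rightarrow> complex mat \<Rightarrow> bool" where
  "density n M \<longleftrightarrow> psd n M \<and> mtrace M = 1"

definition kron :: "complex mat \<Rightarrow> complex mat \<Rightarrow> complex mat" where
  "kron A B = mat (dim_row A * dim_row B) (dim_col A * dim_col B)
     (\<lambda>(i,j). A $$ (i div dim_row B, j div dim_col B) * B $$ (i mod dim_row B, j mod dim_col B))"

definition ptrA :: "nat \<Rightarrow> nat \<Rightarrow> complex mat \<Rightarrow> complex mat" where
  "ptrA dA dB M = mat dB dB (\<lambda>(i,j). \<Sum>k<dA. M $$ (k*dB + i, k*dB + j))"

text \<open>(Phi (x) I_B)(M) for a map Phi from operators on C^dA to operators on C^dA',
  applied to an operator M on C^dA (x) C^dB (the linear extension, blockwise).\<close>
definition liftA :: "(complex mat \<Rightarrow> complex mat) \<Rightarrow> nat \<Rightarrow> nat \<Rightarrow> nat \<Rightarrow> complex mat \<Rightarrow> complex mat" where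
  "liftA Phi dA dA' dB M = mat (dA' * dB) (dA' * dB) (\<lambda>(i,j).
     Phi (mat dA dA (\<lambda>(a,a'). M $$ (a*dB + i mod dB, a'*dB + j mod dB))) $$ (i div dB, j div dB))"

definition cptp :: "nat \<Rightarrow> nat \<Rightarrow> (complex mat \<Rightarrow> complex mat) \<Rightarrow> bool" where
  "cptp n m E \<longleftrightarrow>
     (\<forall>A \<in> carrier_mat n n. E A \<in> carrier_mat m m) \<and>
     (\<forall>A \<in> carrier_mat n n. \<forall>B \<in> carrier_mat n n. E (A + B) = E A + E B) \<and>
     (\<forall>A \<in> carrier_mat n n. \<forall>c. E (c \<cdot>\<^sub>m A) = c \<cdot>\<^sub>m E A) \<and>
     (\<forall>A \<in> carrier_mat n n. mtrace (E A) = mtrace A) \<and>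
     (\<forall>k M. psd (n * k) M \<longrightarrow> psd (m * k) (liftA E n m k M))"

definition relK :: "real \<Rightarrow> (complex mat \<Rightarrow> complex mat \<Rightarrow> ereal) \<Rightarrow> bool" where
  "relK b D \<longleftrightarrow>
    (\<forall>n m E S T. cptp n m E \<and> psd n S \<and> psd n T \<longrightarrow> D (E S) (E T) \<le> D S T) \<and>
    (\<forall>n n' S T T'. psd n S \<and> psd n T \<and> psd n' T' \<longrightarrow>
       D (four_block_mat S (0\<^sub>m n n') (0\<^sub>m n' n) (0\<^sub>m n' n'))
         (four_block_mat T (0\<^sub>m n n') (0\<^sub>m n' n) T') = D S T) \<and>
    (\<forall>n S T (c::real). psd n S \<and> psd n T \<and> c > 0 \<longrightarrow>
       D S (complex_of_real c \<cdot>\<^sub>m T) = D S T + ereal (log b (1 / c))) \<and>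
    (\<forall>n \<rho>. density n \<rho> \<longrightarrow> D \<rho> \<rho> = 0)"

text \<open>Conditional K-entropy H_K(A|B) of an operator rho on C^dA (x) C^dB.
  If the flag is True: first form -D(rho || 1_A (x) rho_B);
  if False: second form, sup (= max) over density operators sigma_B.\<close>
definition HK :: "bool \<Rightarrow> (complex mat \<Rightarrow> complex mat \<Rightarrow> ereal) \<Rightarrow> nat \<Rightarrow> nat \<Rightarrow> complex mat \<Rightarrow> ereal" where
  "HK first D dA dB \<rho> =
     (if first then - D \<rho> (kron (1\<^sub>m dA) (ptrA dA dB \<rho>))
      else (SUP \<sigma> \<in> {\<sigma>. density dB \<sigma>}. - D \<rho> (kron (1\<^sub>m dA) \<sigma>)))"

definition povm :: "nat \<Rightarrow> nat \<Rightarrow> (nat \<Rightarrow> complex mat) \<Rightarrow> bool" where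
  "povm dA m X \<longleftrightarrow> (\<forall>j<m. psd dA (X j)) \<and>
     (\<forall>i<dA. \<forall>i'<dA. (\<Sum>j<m. X j $$ (i,i')) = (if i = i' then 1 else 0))"

definition meas :: "nat \<Rightarrow> (nat \<Rightarrow> complex mat) \<Rightarrow> complex mat \<Rightarrow> complex mat" where
  "meas m X \<rho> = mat m m (\<lambda>(i,j). if i = j then mtrace (X i * \<rho>) else 0)"

text \<open>Support (= range, for psd operators) of P and Q on C^n are orthogonal.\<close>
definition orth_supp :: "nat \<Rightarrow> complex mat \<Rightarrow> complex mat \<Rightarrow> bool" where
  "orth_supp n P Q \<longleftrightarrow> (\<forall>u \<in> carrier_vec n. \<forall>v \<in> carrier_vec n. (P *\<^sub>v u) \<bullet>c (Q *\<^sub>v v) = 0)"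

end

theory Submission
  imports Defs
begin

text \<open>Measuring A turns \<rho>_AB into the block-diagonal operator \<rho>_XB = \<Oplus>_x \<rho>_x with
  \<rho>_x = Tr_A((X_x \<otimes> 1) \<rho>), whose B-marginal is again \<rho>_B. Blockwise
  \<rho>_B = \<rho>_x + Tr_A(((1 - X_x) \<otimes> 1) \<rho>), so 1 \<otimes> \<rho>_B is \<rho>_XB plus a positive operator. Embedding
  into a direct sum and tracing out the extra qubit shows that D decreases when its second
  argument grows, whence D(\<rho>_XB \<parallel> 1 \<otimes> \<rho>_B) \<le> D(\<rho>_XB \<parallel> \<rho>_XB) = 0, i.e. H_K(X|B) \<ge> 0 for both
  forms of H_K.

  If the \<rho>_x have mutually orthogonal supports, let \<Pi> be the block-diagonal projector onto
  them. The measurement {\<Pi>, 1 - \<Pi>} sends \<rho>_XB to diag(1, 0) and 1 \<otimes> \<sigma> to diag(t, m - t), where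
  t = \<Sum>_x Tr(\<Pi>_x \<sigma>) \<le> Tr \<sigma> = 1 because \<Sum>_x \<Pi>_x \<le> 1 (Bessel's inequality). Data processing,
  invariance under orthogonal blocks and scaling give D(\<rho>_XB \<parallel> 1 \<otimes> \<sigma>) \<ge> log(1/t) \<ge> 0 for every
  density operator \<sigma>, so H_K(X|B) \<le> 0.\<close>

lemma sum_nat_mult_split:
  fixes f :: "nat \<Rightarrow> 'a::comm_monoid_add"
  shows "(\<Sum>i<a*b. f i) = (\<Sum>x<a. \<Sum>y<b. f (x*b+y))"
proof (induction a)
  case (Suc a)
  have "(\<Sum>i<Suc a*b. f i) = (\<Sum>i<a*b. f i) + (\<Sum>i\<in>{a*b..<a*b+b}. f i)"
    by (simp add: lessThan_atLeast0 sum.atLeastLessThan_concat add.commute)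
  also have "(\<Sum>i\<in>{a*b..<a*b+b}. f i) = (\<Sum>y<b. f (a*b+y))"
    using sum.shift_bounds_nat_ivl[of f 0 "a*b" b] by (simp add: lessThan_atLeast0 add.commute)
  finally show ?case using Suc by simp
qed simp

lemma sum_nat_add_split:
  fixes f :: "nat \<Rightarrow> 'a::comm_monoid_add"
  shows "(\<Sum>i<a+b. f i) = (\<Sum>i<a. f i) + (\<Sum>i<b. f (a+i))"
proof -
  have "(\<Sum>i<a+b. f i) = (\<Sum>i<a. f i) + (\<Sum>i\<in>{a..<a+b}. f i)"
    by (simp add: lessThan_atLeast0 sum.atLeastLessThan_concat)
  also have "(\<Sum>i\<in>{a..<a+b}. f i) = (\<Sum>i<b. f (a+i))"
    using sum.shift_bounds_nat_ivl[of f 0 a b] by (simp add: lessThan_atLeast0 add.commute)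
  finally show ?thesis .
qed

lemma mult_add_less_mult: "x < m \<Longrightarrow> y < k \<Longrightarrow> x*k + y < m*(k::nat)"
  using mult_le_mono1[of "Suc x" m k] by simp

lemma div_less_of_less_mult: "(i::nat) < m*k \<Longrightarrow> i div k < m"
  by (simp add: less_mult_imp_div_less)

lemma mod_less_of_less_mult: "(i::nat) < m*k \<Longrightarrow> i mod k < k"
  by (cases k) simp_all

lemma div_mod_eq_iff: "(i::nat) = j \<longleftrightarrow> i div k = j div k \<and> i mod k = j mod k"
  by (metis div_mult_mod_eq)

lemma sum_swap4:
  fixes f :: "'a \<Rightarrow> 'b \<Rightarrow> 'c \<Rightarrow> 'd \<Rightarrow> 'e::comm_monoid_add"
  shows "(\<Sum>i\<in>I. \<Sum>j\<in>J. \<Sum>k\<in>K. \<Sum>l\<in>L. f i j k l) = (\<Sum>k\<in>K. \<Sum>l\<in>L. \<Sum>i\<in>I. \<Sum>j\<in>J. f i j k l)"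
proof -
  have "(\<Sum>i\<in>I. \<Sum>j\<in>J. \<Sum>k\<in>K. \<Sum>l\<in>L. f i j k l) = (\<Sum>i\<in>I. \<Sum>k\<in>K. \<Sum>j\<in>J. \<Sum>l\<in>L. f i j k l)"
    by (rule sum.cong[OF refl], rule sum.swap)
  also have "\<dots> = (\<Sum>i\<in>I. \<Sum>k\<in>K. \<Sum>l\<in>L. \<Sum>j\<in>J. f i j k l)"
    by (rule sum.cong[OF refl], rule sum.cong[OF refl], rule sum.swap)
  also have "\<dots> = (\<Sum>k\<in>K. \<Sum>i\<in>I. \<Sum>l\<in>L. \<Sum>j\<in>J. f i j k l)"
    by (rule sum.swap)
  also have "\<dots> = (\<Sum>k\<in>K. \<Sum>l\<in>L. \<Sum>i\<in>I. \<Sum>j\<in>J. f i j k l)"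
    by (rule sum.cong[OF refl], rule sum.swap)
  finally show ?thesis .
qed

section \<open>Positive semidefinite kernels\<close>

text \<open>An n \<times> n matrix is handled through its entry function p; this avoids carrier
  bookkeeping in the heavy index manipulations below.\<close>

definition qform :: "nat \<Rightarrow> (nat \<Rightarrow> nat \<Rightarrow> complex) \<Rightarrow> (nat \<Rightarrow> complex) \<Rightarrow> complex" where
  "qform n p v = (\<Sum>i<n. \<Sum>l<n. cnj (v i) * p i l * v l)"

definition psd_kernel :: "nat \<Rightarrow> (nat \<Rightarrow> nat \<Rightarrow> complex) \<Rightarrow> bool" where
  "psd_kernel n p \<longleftrightarrow> (\<forall>v. qform n p v \<ge> 0)"

lemma cscalar_prod_mult_mat_vec_eq_qform:
  assumes "M \<in> carrier_mat n n"
  shows "(M *\<^sub>v vec n v) \<bullet>c vec n v = qform n (\<lambda>i l. M $$ (i,l)) v"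
  using assms unfolding qform_def
  by (auto simp: scalar_prod_def mult_mat_vec_def sum_distrib_left sum_distrib_right
      intro!: sum.cong simp: ac_simps)

lemma psd_iff_psd_kernel: "psd n M \<longleftrightarrow> M \<in> carrier_mat n n \<and> psd_kernel n (\<lambda>i l. M $$ (i,l))"
proof
  assume "psd n M"
  then have M: "M \<in> carrier_mat n n" and nonneg: "\<And>w. w \<in> carrier_vec n \<Longrightarrow>
     Im ((M *\<^sub>v w) \<bullet>c w) = 0 \<and> Re ((M *\<^sub>v w) \<bullet>c w) \<ge> 0" unfolding psd_def by auto
  have "qform n (\<lambda>i l. M $$ (i,l)) v \<ge> 0" for v
    using nonneg[of "vec n v"] cscalar_prod_mult_mat_vec_eq_qform[OF M] by (simp add: less_eq_complex_def)
  with M show "M \<in> carrier_mat n n \<and> psd_kernel n (\<lambda>i l. M $$ (i,l))"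
    unfolding psd_kernel_def by blast
next
  assume M: "M \<in> carrier_mat n n \<and> psd_kernel n (\<lambda>i l. M $$ (i,l))"
  have "(M *\<^sub>v w) \<bullet>c w \<ge> 0" if "w \<in> carrier_vec n" for w
  proof -
    have "w = vec n (\<lambda>i. w $ i)" using that by auto
    then show ?thesis
      using M cscalar_prod_mult_mat_vec_eq_qform[of M n "\<lambda>i. w $ i"] unfolding psd_kernel_def by metis
  qed
  with M show "psd n M" unfolding psd_def by (simp add: less_eq_complex_def)
qed

lemma qform_diff: "qform n (\<lambda>i l. p i l - q i l) v = qform n p v - qform n q v"
  unfolding qform_def by (simp add: algebra_simps sum_subtractf)

lemma qform_sum: "finite Y \<Longrightarrow> qform n (\<lambda>i l. \<Sum>y\<in>Y. p y i l) v = (\<Sum>y\<in>Y. qform n (p y) v)"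
  by (induction Y rule: finite_induct) (simp_all add: qform_def algebra_simps sum.distrib)

lemma qform_supported:
  assumes "S \<subseteq> {..<n}" "\<And>j. j \<notin> S \<Longrightarrow> v j = 0"
  shows "qform n p v = (\<Sum>i\<in>S. \<Sum>l\<in>S. cnj (v i) * p i l * v l)"
proof -
  have "qform n p v = (\<Sum>i\<in>S. \<Sum>l<n. cnj (v i) * p i l * v l)"
    unfolding qform_def by (rule sum.mono_neutral_right) (use assms in auto)
  also have "\<dots> = (\<Sum>i\<in>S. \<Sum>l\<in>S. cnj (v i) * p i l * v l)"
    by (rule sum.cong[OF refl], rule sum.mono_neutral_right) (use assms in auto)
  finally show ?thesis .
qed

lemma qform_two_points:
  assumes "a < n" "b < n" "a \<noteq> b"
  shows "qform n p (\<lambda>j. if j = a then c else if j = b then d else 0) =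
    cnj c * p a a * c + cnj c * p a b * d + cnj d * p b a * c + cnj d * p b b * d"
  by (subst qform_supported[of "{a,b}"]) (use assms in auto)

lemma psd_kernel_diag_nonneg: assumes "psd_kernel n p" "a < n" shows "p a a \<ge> 0"
proof -
  have "qform n p (\<lambda>j. if j = a then 1 else 0) = p a a"
    by (subst qform_supported[of "{a}"]) (use assms(2) in auto)
  with assms(1) show ?thesis unfolding psd_kernel_def by metis
qed

lemma psd_kernel_hermitian:
  assumes "psd_kernel n p" "a < n" "b < n"
  shows "p b a = cnj (p a b)"
proof (cases "a = b")
  case True
  then show ?thesis
    using psd_kernel_diag_nonneg[OF assms(1,2)] by (auto simp: less_eq_complex_def complex_eq_iff)
next
  case False
  have "qform n p (\<lambda>j. if j = a then 1 else if j = b then 1 else 0) \<ge> 0"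
    and "qform n p (\<lambda>j. if j = a then 1 else if j = b then \<i> else 0) \<ge> 0"
    using assms unfolding psd_kernel_def by auto
  then have "Im (p a a + p a b + p b a + p b b) = 0" "Im (p a a + \<i> * p a b - \<i> * p b a + p b b) = 0"
    unfolding qform_two_points[OF assms(2,3) False]
    by (simp_all add: less_eq_complex_def algebra_simps)
  moreover have "p a a \<ge> 0" "p b b \<ge> 0" using psd_kernel_diag_nonneg assms by auto
  ultimately show ?thesis by (auto simp: less_eq_complex_def complex_eq_iff)
qed

lemma affine_nonneg_imp_slope_zero: assumes "\<And>s::real. A + s * B \<ge> 0" shows "B = 0"
proof (rule ccontr)
  assume "B \<noteq> 0"
  then have "(-(\<bar>A\<bar>+1)/B) * B = -(\<bar>A\<bar>+1)" by simp
  with assms[of "-(\<bar>A\<bar>+1)/B"] show False by (smt (verit) abs_ge_self)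
qed

lemma psd_kernel_zero_diag:
  assumes p: "psd_kernel n p" and a: "a < n" "p a a = 0" and l: "l < n"
  shows "p a l = 0" "p l a = 0"
proof -
  show "p a l = 0"
  proof (cases "l = a")
    case False
    have herm: "p l a = cnj (p a l)" using psd_kernel_hermitian p a l by auto
    have "Re (p l l) + s * (2 * Re (cnj c * p a l)) \<ge> 0" if "c = 1 \<or> c = \<i>" for s c
    proof -
      have "qform n p (\<lambda>j. if j = a then c * of_real s else if j = l then 1 else 0) \<ge> 0"
        using p unfolding psd_kernel_def by auto
      then show ?thesis
        unfolding qform_two_points[OF a(1) l False[symmetric]] using a(2) herm that
        by (auto simp: less_eq_complex_def algebra_simps)
    qed
    then have "2 * Re (cnj c * p a l) = 0" if "c = 1 \<or> c = \<i>" for c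
      using affine_nonneg_imp_slope_zero that by blast
    from this[of 1] this[of \<i>] have "Re (p a l) = 0" "Im (p a l) = 0" by simp_all
    then show ?thesis by (simp add: complex_eq_iff)
  qed (use a in simp)
  then show "p l a = 0" using psd_kernel_hermitian p a l by (metis complex_cnj_zero)
qed

lemma qform_add_delta:
  assumes "k < n"
  shows "qform n p (\<lambda>i. v i + (if i = k then t else 0)) = qform n p v + cnj t * (\<Sum>l<n. p k l * v l)
     + (\<Sum>i<n. cnj (v i) * p i k) * t + cnj t * p k k * t"
proof -
  define e where "e = (\<lambda>i::nat. if i = k then t else 0)"
  have "qform n p (\<lambda>i. v i + e i) = qform n p v
      + (\<Sum>i<n. \<Sum>l<n. (cnj (v i) * p i l) * e l) + (\<Sum>i<n. cnj (e i) * (\<Sum>l<n. p i l * v l))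
      + (\<Sum>i<n. cnj (e i) * (\<Sum>l<n. p i l * e l))"
    unfolding qform_def by (simp add: algebra_simps sum.distrib sum_distrib_left)
  also have "(\<Sum>i<n. \<Sum>l<n. (cnj (v i) * p i l) * e l) = (\<Sum>i<n. cnj (v i) * p i k) * t"
    unfolding e_def using assms by (simp add: if_distrib[of "\<lambda>x. _ * x"] sum_distrib_right cong: if_cong)
  also have "(\<Sum>i<n. cnj (e i) * (\<Sum>l<n. p i l * v l)) = cnj t * (\<Sum>l<n. p k l * v l)"
    unfolding e_def using assms by (simp add: if_distrib[of cnj] if_distrib[of "\<lambda>x. x * _"] cong: if_cong)
  also have "(\<Sum>i<n. cnj (e i) * (\<Sum>l<n. p i l * e l)) = cnj t * p k k * t"
    unfolding e_def using assms
    by (simp add: if_distrib[of cnj] if_distrib[of "\<lambda>x. x * _"] if_distrib[of "\<lambda>x. _ * x"] mult.assoc cong: if_cong)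
  finally show ?thesis unfolding e_def by simp
qed

text \<open>For p k k = 0 the complement is p itself, since x / 0 = 0.\<close>
lemma psd_kernel_schur_complement:
  assumes p: "psd_kernel n p" and k: "k < n"
  shows "psd_kernel n (\<lambda>i l. p i l - p i k * p k l / p k k)"
proof (cases "p k k = 0")
  case True
  then show ?thesis using p by simp
next
  case c: False
  show ?thesis unfolding psd_kernel_def
  proof
    fix v
    let ?c = "p k k"
    define \<alpha> where "\<alpha> = (\<Sum>l<n. p k l * v l)"
    have real_c: "cnj ?c = ?c"
      using psd_kernel_diag_nonneg[OF p k] by (simp add: less_eq_complex_def complex_eq_iff)
    have \<alpha>_cnj: "(\<Sum>i<n. cnj (v i) * p i k) = cnj \<alpha>"
      unfolding \<alpha>_def by (simp add: psd_kernel_hermitian[OF p k] ac_simps)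
    have "qform n (\<lambda>i l. p i l - p i k * p k l / ?c) v = qform n p v - cnj \<alpha> * \<alpha> / ?c"
      unfolding qform_def \<alpha>_def \<alpha>_cnj[symmetric, unfolded \<alpha>_def]
      by (simp add: algebra_simps sum_subtractf sum_distrib_left sum_distrib_right sum_divide_distrib)
    also have "\<dots> = qform n p (\<lambda>i. v i + (if i = k then - \<alpha> / ?c else 0))"
      unfolding qform_add_delta[OF k] \<alpha>_cnj \<alpha>_def[symmetric] using c real_c by (simp add: field_simps)
    also have "\<dots> \<ge> 0" using p unfolding psd_kernel_def by blast
    finally show "qform n (\<lambda>i l. p i l - p i k * p k l / ?c) v \<ge> 0" .
  qed
qed

lemma psd_kernel_schur_complement_vanishes:
  assumes p: "psd_kernel n p" and k: "k < n"
    and zero: "\<forall>i<n. \<forall>l<n. (Suc k \<le> i \<or> Suc k \<le> l) \<longrightarrow> p i l = 0"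
  shows "\<forall>i<n. \<forall>l<n. (k \<le> i \<or> k \<le> l) \<longrightarrow> p i l - p i k * p k l / p k k = 0"
proof (intro allI impI)
  fix i l assume il: "i < n" "l < n" "k \<le> i \<or> k \<le> l"
  show "p i l - p i k * p k l / p k k = 0"
  proof (cases "i = k \<or> l = k")
    case True
    then show ?thesis using psd_kernel_zero_diag[OF p k] il by (cases "p k k = 0") auto
  next
    case False
    then have "p i l = 0" "p i k = 0 \<or> p k l = 0" using zero il k by (auto simp: Suc_le_eq)
    then show ?thesis by auto
  qed
qed

lemma psd_kernel_gram_aux:
  "k \<le> n \<Longrightarrow> psd_kernel n p \<Longrightarrow> (\<forall>i<n. \<forall>l<n. (k \<le> i \<or> k \<le> l) \<longrightarrow> p i l = 0)
   \<Longrightarrow> \<exists>w. \<forall>i<n. \<forall>l<n. p i l = (\<Sum>s<k. w s i * cnj (w s l))"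
proof (induction k arbitrary: p)
  case (Suc k)
  then have k: "k < n" and p: "psd_kernel n p" by simp_all
  define q where "q = (\<lambda>i l. p i l - p i k * p k l / p k k)"
  define r where "r = complex_of_real (sqrt (Re (p k k)))"
  have pkk: "p k k = of_real (Re (p k k))" "Re (p k k) \<ge> 0"
    using psd_kernel_diag_nonneg[OF p k] by (auto simp: less_eq_complex_def complex_eq_iff)
  have r: "r * cnj r = p k k"
    unfolding r_def using pkk by (simp flip: of_real_mult)
  have q_psd: "psd_kernel n q" unfolding q_def by (rule psd_kernel_schur_complement[OF p k])
  have q_zero: "\<forall>i<n. \<forall>l<n. (k \<le> i \<or> k \<le> l) \<longrightarrow> q i l = 0"
    unfolding q_def using psd_kernel_schur_complement_vanishes[OF p k] Suc.prems(3) by blast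
  obtain w where w: "\<forall>i<n. \<forall>l<n. q i l = (\<Sum>s<k. w s i * cnj (w s l))"
    using Suc.IH[OF _ q_psd q_zero] k by auto
  show ?case
  proof (intro exI allI impI)
    fix i l assume il: "i < n" "l < n"
    let ?w = "w(k := (\<lambda>i. p i k / r))"
    have "(\<Sum>s<Suc k. ?w s i * cnj (?w s l)) = q i l + p i k / r * cnj (p l k / r)"
      using w il by simp
    txt \<open>Also for p k k = 0, where r = 0 and both sides are 0 by the junk value x / 0 = 0.\<close>
    also have "p i k / r * cnj (p l k / r) = p i k * p k l / p k k"
      using psd_kernel_hermitian[OF p il(2) k] r by simp
    finally show "p i l = (\<Sum>s<Suc k. ?w s i * cnj (?w s l))" unfolding q_def by simp
  qed
qed simp

lemma psd_kernel_gram: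
  "psd_kernel n p \<Longrightarrow> \<exists>w. \<forall>i<n. \<forall>l<n. p i l = (\<Sum>s<n. w s i * cnj (w s l))"
  using psd_kernel_gram_aux[of n n p] by auto

lemma psd_kernel_trace_mult_nonneg:
  assumes p: "psd_kernel n p" and r: "psd_kernel n r"
  shows "(\<Sum>i<n. \<Sum>l<n. p i l * r l i) \<ge> 0"
proof -
  obtain w where w: "\<forall>i<n. \<forall>l<n. p i l = (\<Sum>s<n. w s i * cnj (w s l))"
    using psd_kernel_gram[OF p] by blast
  have "(\<Sum>i<n. \<Sum>l<n. p i l * r l i) = (\<Sum>i<n. \<Sum>l<n. \<Sum>s<n. cnj (w s l) * r l i * w s i)"
    using w by (simp add: sum_distrib_left sum_distrib_right ac_simps)
  also have "\<dots> = (\<Sum>i<n. \<Sum>s<n. \<Sum>l<n. cnj (w s l) * r l i * w s i)"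
    by (rule sum.cong[OF refl], rule sum.swap)
  also have "\<dots> = (\<Sum>s<n. \<Sum>l<n. \<Sum>i<n. cnj (w s l) * r l i * w s i)"
    by (subst sum.swap) (rule sum.cong[OF refl], rule sum.swap)
  also have "\<dots> = (\<Sum>s<n. qform n r (w s))"
    unfolding qform_def ..
  also have "\<dots> \<ge> 0" using r unfolding psd_kernel_def by (simp add: sum_nonneg)
  finally show ?thesis .
qed

section \<open>Positive semidefinite matrices\<close>

lemma mtrace_mult:
  assumes "A \<in> carrier_mat n n" "B \<in> carrier_mat n n"
  shows "mtrace (A * B) = (\<Sum>i<n. \<Sum>l<n. A $$ (i,l) * B $$ (l,i))"
  using assms unfolding mtrace_def by (auto simp: scalar_prod_def lessThan_atLeast0 intro!: sum.cong)

lemma mtrace_one_minus_mult: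
  assumes A: "A \<in> carrier_mat n n" and M: "M \<in> carrier_mat n n"
  shows "mtrace ((1\<^sub>m n - A) * M) = mtrace M - mtrace (A * M)"
proof -
  have "mtrace ((1\<^sub>m n - A) * M) = (\<Sum>i<n. \<Sum>l<n. (if i = l then M $$ (l,i) else 0) - A $$ (i,l) * M $$ (l,i))"
    using A M by (subst mtrace_mult) (auto intro!: sum.cong simp: algebra_simps)
  also have "\<dots> = mtrace M - mtrace (A * M)"
    unfolding mtrace_mult[OF A M] using M by (simp add: sum_subtractf mtrace_def)
  finally show ?thesis .
qed

lemma mtrace_mult_psd_nonneg:
  assumes "psd n A" "psd n B"
  shows "mtrace (A * B) \<ge> 0"
proof -
  have "A \<in> carrier_mat n n" "B \<in> carrier_mat n n" using assms unfolding psd_def by auto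
  then show ?thesis
    using assms psd_kernel_trace_mult_nonneg[of n "\<lambda>i l. A $$ (i,l)" "\<lambda>i l. B $$ (i,l)"]
    by (simp add: psd_iff_psd_kernel mtrace_mult)
qed

lemma cnj_mult_self_nonneg: "cnj z * z \<ge> (0::complex)"
  using conjugate_square_positive[of z] by (simp add: mult.commute)

lemma psd_zero: "psd n (0\<^sub>m n n)"
  unfolding psd_iff_psd_kernel psd_kernel_def qform_def by simp

lemma psd_one: "psd n (1\<^sub>m n)"
proof -
  have "qform n (\<lambda>i l. 1\<^sub>m n $$ (i,l)) v = (\<Sum>i<n. cnj (v i) * v i)" for v
    unfolding qform_def by (simp add: if_distrib[of "\<lambda>x. _ * x * _"] cong: if_cong)
  then show ?thesis unfolding psd_iff_psd_kernel psd_kernel_def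
    by (simp add: sum_nonneg cnj_mult_self_nonneg)
qed

lemma psd_four_block_diag:
  assumes A: "psd n A" and B: "psd n' B"
  shows "psd (n+n') (four_block_mat A (0\<^sub>m n n') (0\<^sub>m n' n) B)"
proof -
  have Ac: "A \<in> carrier_mat n n" and Bc: "B \<in> carrier_mat n' n'" using A B unfolding psd_def by auto
  have "qform (n+n') (\<lambda>i l. four_block_mat A (0\<^sub>m n n') (0\<^sub>m n' n) B $$ (i,l)) v
     = qform n (\<lambda>i l. A $$ (i,l)) v + qform n' (\<lambda>i l. B $$ (i,l)) (\<lambda>i. v (n+i))" for v
    unfolding qform_def using Ac Bc by (simp add: sum_nat_add_split sum.distrib)
  then show ?thesis using A B Ac Bc unfolding psd_iff_psd_kernel psd_kernel_def by simp
qed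

section \<open>Block-diagonal matrices\<close>

definition block_diag :: "nat \<Rightarrow> nat \<Rightarrow> (nat \<Rightarrow> complex mat) \<Rightarrow> complex mat" where
  "block_diag m k Q = mat (m*k) (m*k)
     (\<lambda>(i,j). if i div k = j div k then Q (i div k) $$ (i mod k, j mod k) else 0)"

lemma block_diag_carrier: "block_diag m k Q \<in> carrier_mat (m*k) (m*k)"
  unfolding block_diag_def by simp

lemma index_block_diag:
  assumes "x < m" "y < m" "\<beta> < k" "\<beta>' < k"
  shows "block_diag m k Q $$ (x*k+\<beta>, y*k+\<beta>') = (if x = y then Q x $$ (\<beta>,\<beta>') else 0)"
  unfolding block_diag_def using assms mult_add_less_mult[of x m \<beta> k] mult_add_less_mult[of y m \<beta>' k]
  by auto

lemma sum_block_delta: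
  fixes f :: "nat \<Rightarrow> nat \<Rightarrow> nat \<Rightarrow> 'a::comm_monoid_add"
  shows "(\<Sum>x<m. \<Sum>\<beta><k. \<Sum>y<m. \<Sum>\<beta>'<k. if x = y then f x \<beta> \<beta>' else 0) = (\<Sum>x<m. \<Sum>\<beta><k. \<Sum>\<beta>'<k. f x \<beta> \<beta>')"
  by (rule sum.cong[OF refl], rule sum.cong[OF refl]) (subst sum.swap, simp)

lemma qform_block_diag:
  "qform (m*k) (\<lambda>i l. block_diag m k Q $$ (i,l)) v = (\<Sum>x<m. qform k (\<lambda>a b. Q x $$ (a,b)) (\<lambda>\<beta>. v (x*k+\<beta>)))"
proof -
  have "qform (m*k) (\<lambda>i l. block_diag m k Q $$ (i,l)) v = (\<Sum>x<m. \<Sum>\<beta><k. \<Sum>y<m. \<Sum>\<beta>'<k.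
      if x = y then cnj (v (x*k+\<beta>)) * Q x $$ (\<beta>,\<beta>') * v (x*k+\<beta>') else 0)"
    unfolding qform_def sum_nat_mult_split by (intro sum.cong refl) (simp add: index_block_diag)
  then show ?thesis unfolding qform_def sum_block_delta .
qed

lemma psd_block_diag:
  assumes "\<forall>x<m. psd k (Q x)"
  shows "psd (m*k) (block_diag m k Q)"
  using assms block_diag_carrier
  unfolding psd_iff_psd_kernel psd_kernel_def qform_block_diag by (auto intro!: sum_nonneg)

lemma block_diag_add:
  assumes "\<forall>x<m. P x \<in> carrier_mat k k \<and> Q x \<in> carrier_mat k k"
  shows "block_diag m k P + block_diag m k Q = block_diag m k (\<lambda>x. P x + Q x)"
proof (rule eq_matI)
  fix i j assume "i < dim_row (block_diag m k (\<lambda>x. P x + Q x))" "j < dim_col (block_diag m k (\<lambda>x. P x + Q x))"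
  then have ij: "i < m*k" "j < m*k" by (simp_all add: block_diag_def)
  then have "P (j div k) \<in> carrier_mat k k" "Q (j div k) \<in> carrier_mat k k" "i mod k < k" "j mod k < k"
    using assms div_less_of_less_mult[of j m k] mod_less_of_less_mult[of _ m k] by auto
  then show "(block_diag m k P + block_diag m k Q) $$ (i,j) = block_diag m k (\<lambda>x. P x + Q x) $$ (i,j)"
    using ij by (simp add: block_diag_def)
qed (simp_all add: block_diag_def)

lemma block_diag_cong: "(\<And>x. x < m \<Longrightarrow> P x = Q x) \<Longrightarrow> block_diag m k P = block_diag m k Q"
  unfolding block_diag_def by (intro cong_mat refl) (auto simp: div_less_of_less_mult)

lemma one_minus_block_diag:
  assumes "\<forall>x<m. Q x \<in> carrier_mat k k"
  shows "1\<^sub>m (m*k) - block_diag m k Q = block_diag m k (\<lambda>x. 1\<^sub>m k - Q x)"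
proof (rule eq_matI)
  fix i j assume "i < dim_row (block_diag m k (\<lambda>x. 1\<^sub>m k - Q x))" "j < dim_col (block_diag m k (\<lambda>x. 1\<^sub>m k - Q x))"
  then have ij: "i < m*k" "j < m*k" by (simp_all add: block_diag_def)
  then have "Q (i div k) \<in> carrier_mat k k" "i mod k < k" "j mod k < k"
    using assms div_less_of_less_mult[of i m k] mod_less_of_less_mult[of _ m k] by auto
  moreover have "(i = j) = (i div k = j div k \<and> i mod k = j mod k)" by (rule div_mod_eq_iff)
  ultimately show "(1\<^sub>m (m*k) - block_diag m k Q) $$ (i,j) = block_diag m k (\<lambda>x. 1\<^sub>m k - Q x) $$ (i,j)"
    using ij by (auto simp: block_diag_def)
qed (simp_all add: block_diag_def)

lemma kron_one_eq_block_diag: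
  assumes "\<sigma> \<in> carrier_mat k k"
  shows "kron (1\<^sub>m m) \<sigma> = block_diag m k (\<lambda>_. \<sigma>)"
proof (rule eq_matI)
  fix i j assume "i < dim_row (block_diag m k (\<lambda>_. \<sigma>))" "j < dim_col (block_diag m k (\<lambda>_. \<sigma>))"
  then have "i < m*k" "j < m*k" by (simp_all add: block_diag_def)
  then show "kron (1\<^sub>m m) \<sigma> $$ (i,j) = block_diag m k (\<lambda>_. \<sigma>) $$ (i,j)"
    using assms div_less_of_less_mult[of i m k] div_less_of_less_mult[of j m k]
    by (simp add: kron_def block_diag_def)
qed (use assms in \<open>simp_all add: kron_def block_diag_def\<close>)

lemma mtrace_block_diag:
  assumes "\<forall>x<m. Q x \<in> carrier_mat k k"
  shows "mtrace (block_diag m k Q) = (\<Sum>x<m. mtrace (Q x))"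
  unfolding mtrace_def block_diag_carrier[THEN carrier_matD(1)] sum_nat_mult_split
proof (rule sum.cong[OF refl])
  fix x assume "x \<in> {..<m}"
  moreover have "Q x \<in> carrier_mat k k" using assms calculation by auto
  ultimately show "(\<Sum>\<beta><k. block_diag m k Q $$ (x*k+\<beta>, x*k+\<beta>)) = (\<Sum>i<dim_row (Q x). Q x $$ (i,i))"
    by (simp add: index_block_diag)
qed

lemma mtrace_mult_block_diag:
  assumes "\<forall>x<m. P x \<in> carrier_mat k k \<and> Q x \<in> carrier_mat k k"
  shows "mtrace (block_diag m k P * block_diag m k Q) = (\<Sum>x<m. mtrace (P x * Q x))"
proof -
  have "mtrace (block_diag m k P * block_diag m k Q) = (\<Sum>x<m. \<Sum>\<beta><k. \<Sum>y<m. \<Sum>\<beta>'<k.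
      if x = y then P x $$ (\<beta>,\<beta>') * Q x $$ (\<beta>',\<beta>) else 0)"
    unfolding mtrace_mult[OF block_diag_carrier block_diag_carrier] sum_nat_mult_split
    by (intro sum.cong refl) (simp add: index_block_diag)
  also have "\<dots> = (\<Sum>x<m. mtrace (P x * Q x))"
    unfolding sum_block_delta using assms by (intro sum.cong refl) (simp add: mtrace_mult[of "P _" k])
  finally show ?thesis .
qed

lemma dim_ptrA [simp]: "dim_row (ptrA dA dB M) = dB" "dim_col (ptrA dA dB M) = dB"
  by (simp_all add: ptrA_def)

lemma ptrA_carrier [simp]: "ptrA dA dB M \<in> carrier_mat dB dB"
  by (simp add: ptrA_def)

lemma ptrA_block_diag: "ptrA m k (block_diag m k Q) = mat k k (\<lambda>(i,j). \<Sum>x<m. Q x $$ (i,j))"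
  by (intro eq_matI) (auto simp: ptrA_def index_block_diag)

section \<open>Partial trace and measurement channels\<close>

lemma index_ptrA_kron_mult:
  assumes X: "X \<in> carrier_mat dA dA" and \<rho>: "\<rho> \<in> carrier_mat (dA*dB) (dA*dB)"
    and \<beta>: "\<beta> < dB" "\<beta>' < dB"
  shows "ptrA dA dB (kron X (1\<^sub>m dB) * \<rho>) $$ (\<beta>,\<beta>')
    = (\<Sum>a<dA. \<Sum>a'<dA. X $$ (a,a') * \<rho> $$ (a'*dB+\<beta>, a*dB+\<beta>'))"
proof -
  have K: "kron X (1\<^sub>m dB) \<in> carrier_mat (dA*dB) (dA*dB)" unfolding kron_def using X by auto
  have "(kron X (1\<^sub>m dB) * \<rho>) $$ (a*dB+\<beta>, a*dB+\<beta>') = (\<Sum>a'<dA. X $$ (a,a') * \<rho> $$ (a'*dB+\<beta>, a*dB+\<beta>'))"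
    if a: "a < dA" for a
  proof -
    have "(kron X (1\<^sub>m dB) * \<rho>) $$ (a*dB+\<beta>, a*dB+\<beta>')
        = (\<Sum>l<dA*dB. kron X (1\<^sub>m dB) $$ (a*dB+\<beta>, l) * \<rho> $$ (l, a*dB+\<beta>'))"
      using K \<rho> a \<beta> mult_add_less_mult[of a dA] by (simp add: scalar_prod_def lessThan_atLeast0)
    also have "\<dots> = (\<Sum>a'<dA. \<Sum>\<gamma><dB. kron X (1\<^sub>m dB) $$ (a*dB+\<beta>, a'*dB+\<gamma>) * \<rho> $$ (a'*dB+\<gamma>, a*dB+\<beta>'))"
      by (rule sum_nat_mult_split)
    also have "\<dots> = (\<Sum>a'<dA. \<Sum>\<gamma><dB. if \<gamma> = \<beta> then X $$ (a,a') * \<rho> $$ (a'*dB+\<gamma>, a*dB+\<beta>') else 0)"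
      using X a \<beta> by (intro sum.cong refl) (auto simp: kron_def mult_add_less_mult)
    finally show ?thesis using \<beta> by simp
  qed
  then show ?thesis unfolding ptrA_def using \<beta> by simp
qed

lemma psd_kernel_compress:
  assumes "psd_kernel (n*k) p"
  shows "psd_kernel n (\<lambda>a' a. \<Sum>\<beta><k. \<Sum>\<beta>'<k. cnj (u \<beta>) * p (a'*k+\<beta>) (a*k+\<beta>') * u \<beta>')"
  unfolding psd_kernel_def
proof
  fix z
  define w where "w = (\<lambda>i. z (i div k) * u (i mod k))"
  have "qform n (\<lambda>a' a. \<Sum>\<beta><k. \<Sum>\<beta>'<k. cnj (u \<beta>) * p (a'*k+\<beta>) (a*k+\<beta>') * u \<beta>') z
     = (\<Sum>a'<n. \<Sum>a<n. \<Sum>\<beta><k. \<Sum>\<beta>'<k. cnj (w (a'*k+\<beta>)) * p (a'*k+\<beta>) (a*k+\<beta>') * w (a*k+\<beta>'))"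
    unfolding qform_def w_def
    by (auto simp: sum_distrib_left sum_distrib_right ac_simps intro!: sum.cong)
  also have "\<dots> = (\<Sum>a'<n. \<Sum>\<beta><k. \<Sum>a<n. \<Sum>\<beta>'<k. cnj (w (a'*k+\<beta>)) * p (a'*k+\<beta>) (a*k+\<beta>') * w (a*k+\<beta>'))"
    by (rule sum.cong[OF refl], rule sum.swap)
  also have "\<dots> = qform (n*k) p w" by (simp add: qform_def sum_nat_mult_split)
  also have "\<dots> \<ge> 0" using assms unfolding psd_kernel_def by blast
  finally show "qform n (\<lambda>a' a. \<Sum>\<beta><k. \<Sum>\<beta>'<k. cnj (u \<beta>) * p (a'*k+\<beta>) (a*k+\<beta>') * u \<beta>') z \<ge> 0" .
qed

text \<open>The operator Tr_A((X \<otimes> 1) \<rho>) is the Hilbert--Schmidt pairing of X with the operator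
  obtained by compressing \<rho> to a vector of the B factor.\<close>
lemma psd_ptrA_kron_mult:
  assumes X: "psd dA X" and \<rho>: "psd (dA*dB) \<rho>"
  shows "psd dB (ptrA dA dB (kron X (1\<^sub>m dB) * \<rho>))"
proof -
  have Xc: "X \<in> carrier_mat dA dA" and \<rho>c: "\<rho> \<in> carrier_mat (dA*dB) (dA*dB)"
    using X \<rho> unfolding psd_def by auto
  have "qform dB (\<lambda>\<beta> \<beta>'. ptrA dA dB (kron X (1\<^sub>m dB) * \<rho>) $$ (\<beta>,\<beta>')) v \<ge> 0" for v
  proof -
    define R where "R = (\<lambda>a' a. \<Sum>\<beta><dB. \<Sum>\<beta>'<dB. cnj (v \<beta>) * \<rho> $$ (a'*dB+\<beta>, a*dB+\<beta>') * v \<beta>')"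
    have "psd_kernel (dA*dB) (\<lambda>i l. \<rho> $$ (i,l))" using \<rho> unfolding psd_iff_psd_kernel by auto
    then have R: "psd_kernel dA R" unfolding R_def by (rule psd_kernel_compress)
    have "qform dB (\<lambda>\<beta> \<beta>'. ptrA dA dB (kron X (1\<^sub>m dB) * \<rho>) $$ (\<beta>,\<beta>')) v
      = (\<Sum>\<beta><dB. \<Sum>\<beta>'<dB. \<Sum>a<dA. \<Sum>a'<dA. X $$ (a,a') * (cnj (v \<beta>) * \<rho> $$ (a'*dB+\<beta>, a*dB+\<beta>') * v \<beta>'))"
      unfolding qform_def using Xc \<rho>c
      by (intro sum.cong refl) (simp add: index_ptrA_kron_mult sum_distrib_left sum_distrib_right ac_simps)
    also have "\<dots> = (\<Sum>a<dA. \<Sum>a'<dA. X $$ (a,a') * R a' a)"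
      unfolding R_def sum_distrib_left by (rule sum_swap4)
    also have "\<dots> \<ge> 0"
      using psd_kernel_trace_mult_nonneg[OF _ R] X unfolding psd_iff_psd_kernel by blast
    finally show ?thesis .
  qed
  then show ?thesis unfolding psd_iff_psd_kernel psd_kernel_def ptrA_def by simp
qed

lemma kron_one_one: "kron (1\<^sub>m a) (1\<^sub>m b) = 1\<^sub>m (a*b)"
proof (rule eq_matI)
  fix i j assume "i < dim_row (1\<^sub>m (a*b))" "j < dim_col (1\<^sub>m (a*b))"
  then have ij: "i < a*b" "j < a*b" by simp_all
  have "(i = j) = (i div b = j div b \<and> i mod b = j mod b)" by (rule div_mod_eq_iff)
  then show "kron (1\<^sub>m a) (1\<^sub>m b) $$ (i,j) = 1\<^sub>m (a*b) $$ (i,j)"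
    using ij div_less_of_less_mult[of _ a b] mod_less_of_less_mult[of _ a b] by (auto simp: kron_def)
qed (simp_all add: kron_def)

lemma psd_ptrA:
  assumes "psd (dA*dB) \<rho>"
  shows "psd dB (ptrA dA dB \<rho>)"
proof -
  have "\<rho> \<in> carrier_mat (dA*dB) (dA*dB)" using assms unfolding psd_def by auto
  then have "kron (1\<^sub>m dA) (1\<^sub>m dB) * \<rho> = \<rho>" by (simp add: kron_one_one)
  then show ?thesis using psd_ptrA_kron_mult[OF psd_one assms] by simp
qed

lemma mtrace_ptrA:
  assumes "M \<in> carrier_mat (n*k) (n*k)"
  shows "mtrace (ptrA n k M) = mtrace M"
  using assms unfolding mtrace_def ptrA_def by (simp add: sum_nat_mult_split sum.swap[of _ "{..<k}"])

lemma liftA_ptrA: "liftA (ptrA dA n) (dA*n) n k M = ptrA dA (n*k) M"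
proof (rule eq_matI)
  fix i j assume "i < dim_row (ptrA dA (n*k) M)" "j < dim_col (ptrA dA (n*k) M)"
  then have ij: "i < n*k" "j < n*k" by (simp_all add: ptrA_def)
  have shift: "(c*n + i div k)*k + i mod k = c*(n*k) + i" for c i
    by (metis add.assoc add_mult_distrib div_mult_mod_eq mult.assoc)
  show "liftA (ptrA dA n) (dA*n) n k M $$ (i,j) = ptrA dA (n*k) M $$ (i,j)"
    using ij div_less_of_less_mult[of _ n k]
    by (simp add: liftA_def ptrA_def mult_add_less_mult shift)
qed (simp_all add: liftA_def ptrA_def)

lemma cptp_ptrA: "cptp (dA*n) n (ptrA dA n)"
  unfolding cptp_def
proof (intro conjI ballI allI impI)
  fix A B :: "complex mat" and c :: complex
  assume A: "A \<in> carrier_mat (dA*n) (dA*n)" and B: "B \<in> carrier_mat (dA*n) (dA*n)"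
  show "ptrA dA n A \<in> carrier_mat n n" by (simp add: ptrA_def)
  show "ptrA dA n (A + B) = ptrA dA n A + ptrA dA n B"
    using A B by (intro eq_matI) (auto simp: ptrA_def sum.distrib mult_add_less_mult)
  show "ptrA dA n (c \<cdot>\<^sub>m A) = c \<cdot>\<^sub>m ptrA dA n A"
    using A by (intro eq_matI) (auto simp: ptrA_def sum_distrib_left mult_add_less_mult)
  show "mtrace (ptrA dA n A) = mtrace A" by (rule mtrace_ptrA[OF A])
next
  fix k M assume "psd (dA*n*k) M"
  then show "psd (n*k) (liftA (ptrA dA n) (dA*n) n k M)"
    unfolding liftA_ptrA by (intro psd_ptrA) (simp add: mult.assoc)
qed

lemma liftA_meas_eq_block_diag:
  assumes X: "\<forall>x<m. X x \<in> carrier_mat n n" and M: "M \<in> carrier_mat (n*k) (n*k)"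
  shows "liftA (meas m X) n m k M = block_diag m k (\<lambda>x. ptrA n k (kron (X x) (1\<^sub>m k) * M))"
proof (rule eq_matI)
  fix i j assume "i < dim_row (block_diag m k (\<lambda>x. ptrA n k (kron (X x) (1\<^sub>m k) * M)))"
    "j < dim_col (block_diag m k (\<lambda>x. ptrA n k (kron (X x) (1\<^sub>m k) * M)))"
  then have ij: "i < m*k" "j < m*k" by (simp_all add: block_diag_def)
  then have "X (j div k) \<in> carrier_mat n n" "i div k < m" "j div k < m" "i mod k < k" "j mod k < k"
    using X div_less_of_less_mult mod_less_of_less_mult by auto
  then show "liftA (meas m X) n m k M $$ (i,j) = block_diag m k (\<lambda>x. ptrA n k (kron (X x) (1\<^sub>m k) * M)) $$ (i,j)"
    using ij M by (simp add: liftA_def meas_def block_diag_def mtrace_mult[of "X _" n] index_ptrA_kron_mult)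
qed (simp_all add: liftA_def block_diag_def)

lemma psd_liftA_meas:
  assumes X: "\<forall>x<m. psd n (X x)" and M: "psd (n*k) M"
  shows "psd (m*k) (liftA (meas m X) n m k M)"
proof -
  have "\<forall>x<m. X x \<in> carrier_mat n n" "M \<in> carrier_mat (n*k) (n*k)" using X M unfolding psd_def by auto
  moreover have "psd (m*k) (block_diag m k (\<lambda>x. ptrA n k (kron (X x) (1\<^sub>m k) * M)))"
    using X M by (simp add: psd_block_diag psd_ptrA_kron_mult)
  ultimately show ?thesis by (simp add: liftA_meas_eq_block_diag)
qed

lemma povm_carrier: "povm n m X \<Longrightarrow> \<forall>x<m. X x \<in> carrier_mat n n"
  unfolding povm_def psd_def by auto

lemma meas_cptp:
  assumes P: "povm n m X"
  shows "cptp n m (meas m X)"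
  unfolding cptp_def
proof (intro conjI ballI allI impI)
  have Xc: "\<And>x. x < m \<Longrightarrow> X x \<in> carrier_mat n n" using povm_carrier[OF P] by auto
  fix A B :: "complex mat" and c :: complex
  assume A: "A \<in> carrier_mat n n" and B: "B \<in> carrier_mat n n"
  show "meas m X A \<in> carrier_mat m m" unfolding meas_def by simp
  show "meas m X (c \<cdot>\<^sub>m A) = c \<cdot>\<^sub>m meas m X A"
    using A Xc by (intro eq_matI) (auto simp: meas_def mtrace_mult[of "X _" n] sum_distrib_left ac_simps)
  show "meas m X (A + B) = meas m X A + meas m X B"
    using A B Xc by (intro eq_matI) (auto simp: meas_def mtrace_mult[of "X _" n] distrib_left sum.distrib)
  have "mtrace (meas m X A) = (\<Sum>j<m. mtrace (X j * A))" unfolding mtrace_def meas_def by simp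
  also have "\<dots> = (\<Sum>j<m. \<Sum>i<n. \<Sum>l<n. X j $$ (i,l) * A $$ (l,i))"
    using A Xc by (intro sum.cong refl) (simp add: mtrace_mult)
  also have "\<dots> = (\<Sum>i<n. \<Sum>l<n. (\<Sum>j<m. X j $$ (i,l)) * A $$ (l,i))"
    by (simp add: sum_distrib_right sum.swap[of _ "{..<m}"])
  also have "\<dots> = mtrace A"
    using P A unfolding povm_def mtrace_def by (simp add: if_distrib[of "\<lambda>x. x * _"] cong: if_cong)
  finally show "mtrace (meas m X A) = mtrace A" .
next
  fix k M assume "psd (n*k) M"
  then show "psd (m*k) (liftA (meas m X) n m k M)"
    using psd_liftA_meas P unfolding povm_def by blast
qed

section \<open>Consequences of the axioms of a relative entropy\<close>

lemma index_ptrA_two: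
  assumes "i < n" "j < n"
  shows "ptrA 2 n M $$ (i,j) = M $$ (i,j) + M $$ (n+i, n+j)"
  using assms by (simp add: ptrA_def numeral_2_eq_2)

lemma relK_antimono_right:
  assumes D: "relK b D" and S: "psd n S" and T: "psd n T" and R: "psd n R"
  shows "D S (T + R) \<le> D S T"
proof -
  have Sc: "S \<in> carrier_mat n n" and Tc: "T \<in> carrier_mat n n" and Rc: "R \<in> carrier_mat n n"
    using S T R unfolding psd_def by auto
  define S' where "S' = four_block_mat S (0\<^sub>m n n) (0\<^sub>m n n) (0\<^sub>m n n)"
  define T' where "T' = four_block_mat T (0\<^sub>m n n) (0\<^sub>m n n) R"
  have S': "psd (2*n) S'" unfolding S'_def mult_2 by (rule psd_four_block_diag[OF S psd_zero])
  have T': "psd (2*n) T'" unfolding T'_def mult_2 by (rule psd_four_block_diag[OF T R])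
  have "ptrA 2 n S' = S" using Sc by (intro eq_matI) (auto simp: index_ptrA_two S'_def)
  moreover have "ptrA 2 n T' = T + R" using Tc Rc by (intro eq_matI) (auto simp: index_ptrA_two T'_def)
  moreover have "D (ptrA 2 n S') (ptrA 2 n T') \<le> D S' T'"
    using D cptp_ptrA[of 2 n] S' T' unfolding relK_def by blast
  moreover have "D S' T' = D S T" using D S T R unfolding relK_def S'_def T'_def by blast
  ultimately show ?thesis by simp
qed

definition mat11 :: "complex \<Rightarrow> complex mat" where
  "mat11 c = mat 1 1 (\<lambda>_. c)"

lemma psd_mat11:
  assumes "0 \<le> c"
  shows "psd 1 (mat11 c)"
proof -
  have "qform 1 (\<lambda>i l. mat11 c $$ (i,l)) v = c * (cnj (v 0) * v 0)" for v
    by (simp add: qform_def mat11_def ac_simps)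
  then show ?thesis unfolding psd_iff_psd_kernel psd_kernel_def
    using assms by (simp add: mat11_def mult_nonneg_nonneg cnj_mult_self_nonneg)
qed

lemma relK_mat11_nonneg:
  assumes D: "relK b D" and b: "b > 1" and t: "0 \<le> t" "t \<le> 1"
  shows "D (mat11 1) (mat11 t) \<ge> 0"
proof -
  have S: "psd 1 (mat11 1)" by (rule psd_mat11) (simp add: less_eq_complex_def)
  then have "density 1 (mat11 1)" unfolding density_def by (simp add: mtrace_def mat11_def)
  then have SS: "D (mat11 1) (mat11 1) = 0" using D unfolding relK_def by blast
  obtain r where r: "t = of_real r" "0 \<le> r" "r \<le> 1"
    using t by (intro that[of "Re t"]) (auto simp: less_eq_complex_def complex_eq_iff)
  show ?thesis
  proof (cases "r = 0")
    case True
    then have "mat11 t + mat11 1 = mat11 1" using r by (auto simp: mat11_def)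
    then show ?thesis using relK_antimono_right[OF D S psd_mat11[OF t(1)] S] SS by simp
  next
    case False
    then have "mat11 t = complex_of_real r \<cdot>\<^sub>m mat11 1" "r > 0" using r by (auto simp: mat11_def)
    moreover have "log b (1 / r) \<ge> 0" using b r \<open>r > 0\<close> by simp
    ultimately show ?thesis using D S SS unfolding relK_def by simp
  qed
qed

lemma meas_two_outcomes:
  "meas 2 Y M = four_block_mat (mat11 (mtrace (Y 0 * M))) (0\<^sub>m 1 1) (0\<^sub>m 1 1) (mat11 (mtrace (Y 1 * M)))"
  (is "_ = ?B")
proof (rule eq_matI)
  fix i j assume "i < dim_row ?B" "j < dim_col ?B"
  then have "i = 0 \<or> i = 1" "j = 0 \<or> j = 1" by (auto simp: mat11_def)
  then show "meas 2 Y M $$ (i,j) = ?B $$ (i,j)" by (elim disjE) (simp_all add: meas_def mat11_def)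
qed (auto simp: meas_def mat11_def)

text \<open>Testing S and T with the two-outcome measurement {P, 1 - P} reduces D S T to the
  relative entropy of the 1 \<times> 1 matrices 1 and Tr(P T).\<close>
lemma relK_nonneg_of_test:
  assumes D: "relK b D" and b: "b > 1" and S: "density n S" and T: "psd n T"
    and P: "psd n P" "psd n (1\<^sub>m n - P)" and PS: "mtrace (P * S) = 1" and PT: "mtrace (P * T) \<le> 1"
  shows "D S T \<ge> 0"
proof -
  define Y where "Y = (\<lambda>j::nat. if j = 0 then P else 1\<^sub>m n - P)"
  have Pc: "P \<in> carrier_mat n n" using P unfolding psd_def by auto
  have Sp: "psd n S" and Sc: "S \<in> carrier_mat n n" using S unfolding density_def psd_def by auto
  have "povm n 2 Y"
    unfolding povm_def Y_def using P Pc by (auto simp: numeral_2_eq_2 less_Suc_eq)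
  then have "D (meas 2 Y S) (meas 2 Y T) \<le> D S T"
    using D meas_cptp Sp T unfolding relK_def by blast
  moreover have "meas 2 Y S = four_block_mat (mat11 1) (0\<^sub>m 1 1) (0\<^sub>m 1 1) (0\<^sub>m 1 1)"
  proof -
    have "mtrace ((1\<^sub>m n - P) * S) = 0" using mtrace_one_minus_mult[OF Pc Sc] PS S
      by (simp add: density_def)
    moreover have "mat11 0 = 0\<^sub>m 1 1" unfolding mat11_def by (rule eq_matI) auto
    ultimately show ?thesis unfolding meas_two_outcomes Y_def using PS by simp
  qed
  moreover have "D (four_block_mat (mat11 1) (0\<^sub>m 1 1) (0\<^sub>m 1 1) (0\<^sub>m 1 1)) (meas 2 Y T)
      = D (mat11 1) (mat11 (mtrace (P * T)))"
    unfolding meas_two_outcomes Y_def using D psd_mat11 mtrace_mult_psd_nonneg[OF P(1) T]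
      mtrace_mult_psd_nonneg[OF P(2) T] unfolding relK_def
    by (simp add: psd_mat11 less_eq_complex_def[of 0 1])
  moreover have "D (mat11 1) (mat11 (mtrace (P * T))) \<ge> 0"
    using relK_mat11_nonneg[OF D b mtrace_mult_psd_nonneg[OF P(1) T] PT] .
  ultimately show ?thesis by simp
qed

section \<open>Projectors onto supports\<close>

text \<open>Vectors of C^n are again functions on indices; the support projector of R is built by
  Gram--Schmidt orthogonalisation of the columns of R.\<close>

definition cinner :: "nat \<Rightarrow> (nat \<Rightarrow> complex) \<Rightarrow> (nat \<Rightarrow> complex) \<Rightarrow> complex" where
  "cinner n u v = (\<Sum>i<n. u i * cnj (v i))"

definition orth_family :: "nat \<Rightarrow> (nat \<Rightarrow> complex) list \<Rightarrow> bool" where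
  "orth_family n us \<longleftrightarrow> (\<forall>k<length us. cinner n (us!k) (us!k) \<noteq> 0) \<and>
     (\<forall>k<length us. \<forall>k'<length us. k \<noteq> k' \<longrightarrow> cinner n (us!k) (us!k') = 0)"

definition gs_coeff :: "nat \<Rightarrow> (nat \<Rightarrow> complex) \<Rightarrow> (nat \<Rightarrow> complex) \<Rightarrow> complex" where
  "gs_coeff n w u = cinner n w u / cinner n u u"

definition orth_proj :: "nat \<Rightarrow> (nat \<Rightarrow> complex) list \<Rightarrow> (nat \<Rightarrow> complex) \<Rightarrow> nat \<Rightarrow> complex" where
  "orth_proj n us w = (\<lambda>i. \<Sum>k<length us. gs_coeff n w (us!k) * (us!k) i)"

definition in_col_space :: "nat \<Rightarrow> complex mat \<Rightarrow> (nat \<Rightarrow> complex) \<Rightarrow> bool" where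
  "in_col_space n R u \<longleftrightarrow> (\<exists>z. \<forall>i<n. u i = (\<Sum>l<n. R $$ (i,l) * z l))"

definition proj_fixes :: "nat \<Rightarrow> (nat \<Rightarrow> complex) list \<Rightarrow> (nat \<Rightarrow> complex) \<Rightarrow> bool" where
  "proj_fixes n us w \<longleftrightarrow> (\<forall>i<n. orth_proj n us w i = w i)"

fun orthogonalize :: "nat \<Rightarrow> (nat \<Rightarrow> complex) list \<Rightarrow> (nat \<Rightarrow> complex) list \<Rightarrow> (nat \<Rightarrow> complex) list" where
  "orthogonalize n [] acc = acc"
| "orthogonalize n (w#ws) acc = (if \<forall>i<n. w i - orth_proj n acc w i = 0 then orthogonalize n ws acc
      else orthogonalize n ws (acc @ [(\<lambda>i. w i - orth_proj n acc w i)]))"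

lemma cinner_cnj: "cnj (cinner n u v) = cinner n v u"
  unfolding cinner_def by (simp add: ac_simps)

lemma cinner_diff_left: "cinner n (\<lambda>i. a i - b i) v = cinner n a v - cinner n b v"
  unfolding cinner_def by (simp add: algebra_simps sum_subtractf)

lemma cinner_diff_right: "cinner n u (\<lambda>i. a i - b i) = cinner n u a - cinner n u b"
  by (metis cinner_cnj cinner_diff_left complex_cnj_diff)

lemma cinner_add_left: "cinner n (\<lambda>i. a i + b i) v = cinner n a v + cinner n b v"
  unfolding cinner_def by (simp add: algebra_simps sum.distrib)

lemma cinner_sum_scale_left: "cinner n (\<lambda>i. \<Sum>s\<in>S. c s * f s i) v = (\<Sum>s\<in>S. c s * cinner n (f s) v)"
  unfolding cinner_def by (simp add: sum_distrib_left sum_distrib_right ac_simps) (rule sum.swap)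

lemma cinner_cong: "(\<And>i. i < n \<Longrightarrow> a i = b i) \<Longrightarrow> cinner n a v = cinner n b v"
  unfolding cinner_def by simp

lemma cinner_self_nonneg: "cinner n u u \<ge> 0"
  unfolding cinner_def by (rule sum_nonneg) (metis cnj_mult_self_nonneg mult.commute)

lemma cinner_self_real: "cnj (cinner n u u) = cinner n u u"
  using cinner_cnj by simp

lemma cinner_self_eq_0: assumes "cinner n u u = 0" "i < n" shows "u i = 0"
proof -
  have "\<forall>j\<in>{..<n}. u j * cnj (u j) = 0"
    using assms(1) unfolding cinner_def
    by (subst sum_nonneg_eq_0_iff[symmetric]) (auto intro: sum_nonneg simp: cnj_mult_self_nonneg mult.commute[of "u _"])
  then show ?thesis using assms(2) by auto
qed

lemma cinner_orth_proj_left: "cinner n (orth_proj n us w) v = (\<Sum>k<length us. gs_coeff n w (us!k) * cinner n (us!k) v)"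
  unfolding orth_proj_def by (rule cinner_sum_scale_left)

lemma cinner_orth_proj_member:
  assumes "orth_family n us" "j < length us"
  shows "cinner n (orth_proj n us w) (us!j) = cinner n w (us!j)"
proof -
  have "cinner n (orth_proj n us w) (us!j) = (\<Sum>k<length us. if k = j then gs_coeff n w (us!j) * cinner n (us!j) (us!j) else 0)"
    unfolding cinner_orth_proj_left using assms unfolding orth_family_def by (intro sum.cong refl) auto
  also have "\<dots> = cinner n w (us!j)" using assms unfolding orth_family_def gs_coeff_def by simp
  finally show ?thesis .
qed

lemma orth_proj_snoc: "orth_proj n (us @ [u]) x i = orth_proj n us x i + gs_coeff n x u * u i"
  unfolding orth_proj_def by (simp add: nth_append)

lemma cinner_residual:
  assumes "orth_family n acc" "k < length acc"
  shows "cinner n (acc!k) (\<lambda>i. w i - orth_proj n acc w i) = 0"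
proof -
  have "cinner n (\<lambda>i. w i - orth_proj n acc w i) (acc!k) = 0"
    using cinner_orth_proj_member[OF assms, of w] by (simp add: cinner_diff_left)
  then show ?thesis using cinner_cnj[of n "acc!k" "\<lambda>i. w i - orth_proj n acc w i"] by simp
qed

lemma in_col_space_residual:
  assumes acc: "\<forall>k<length acc. in_col_space n R (acc!k)" and w: "in_col_space n R w"
  shows "in_col_space n R (\<lambda>i. w i - orth_proj n acc w i)"
proof -
  obtain zw where zw: "\<forall>i<n. w i = (\<Sum>l<n. R $$ (i,l) * zw l)"
    using w unfolding in_col_space_def by auto
  obtain Z where Z: "\<And>k. k < length acc \<Longrightarrow> \<forall>i<n. (acc!k) i = (\<Sum>l<n. R $$ (i,l) * Z k l)"
    using acc unfolding in_col_space_def by metis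
  show ?thesis unfolding in_col_space_def
  proof (intro exI allI impI)
    fix i assume i: "i < n"
    have "orth_proj n acc w i = (\<Sum>l<n. R $$ (i,l) * (\<Sum>k<length acc. gs_coeff n w (acc!k) * Z k l))"
      unfolding orth_proj_def using Z i
      by (simp add: sum_distrib_left sum.swap[of _ "{..<length acc}"] ac_simps)
    then show "w i - orth_proj n acc w i
        = (\<Sum>l<n. R $$ (i,l) * (zw l - (\<Sum>k<length acc. gs_coeff n w (acc!k) * Z k l)))"
      using zw i by (simp add: algebra_simps sum_subtractf)
  qed
qed

lemma proj_fixes_snoc:
  assumes "\<forall>k<length acc. cinner n (acc!k) u = 0" "proj_fixes n acc x"
  shows "proj_fixes n (acc @ [u]) x"
proof -
  have "cinner n x u = cinner n (orth_proj n acc x) u"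
    using assms(2) unfolding proj_fixes_def by (intro cinner_cong) auto
  also have "\<dots> = 0" unfolding cinner_orth_proj_left using assms(1) by simp
  finally show ?thesis using assms(2) unfolding proj_fixes_def by (simp add: orth_proj_snoc gs_coeff_def)
qed

lemma proj_fixes_snoc_residual:
  assumes "orth_family n acc" and nz: "cinner n u u \<noteq> 0" and u: "u = (\<lambda>i. w i - orth_proj n acc w i)"
  shows "proj_fixes n (acc @ [u]) w"
proof -
  have "cinner n w u = cinner n (\<lambda>i. u i + orth_proj n acc w i) u"
    unfolding u by (intro cinner_cong) auto
  also have "\<dots> = cinner n u u"
    unfolding cinner_add_left cinner_orth_proj_left using cinner_residual[OF assms(1)] u by simp
  finally have "gs_coeff n w u = 1" unfolding gs_coeff_def using nz by simp
  then show ?thesis unfolding proj_fixes_def by (simp add: orth_proj_snoc u)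
qed

lemma orthogonalize_invariant:
  "orth_family n acc \<Longrightarrow> (\<forall>k<length acc. in_col_space n R (acc!k)) \<Longrightarrow> (\<forall>w\<in>set ws. in_col_space n R w) \<Longrightarrow>
   orth_family n (orthogonalize n ws acc) \<and>
   (\<forall>k<length (orthogonalize n ws acc). in_col_space n R (orthogonalize n ws acc ! k)) \<and>
   (\<forall>w\<in>set ws. proj_fixes n (orthogonalize n ws acc) w) \<and>
   (\<forall>x. proj_fixes n acc x \<longrightarrow> proj_fixes n (orthogonalize n ws acc) x)"
proof (induction ws arbitrary: acc)
  case (Cons w ws)
  define u where "u = (\<lambda>i. w i - orth_proj n acc w i)"
  show ?case
  proof (cases "\<forall>i<n. u i = 0")
    case True
    then have "proj_fixes n acc w" unfolding proj_fixes_def u_def by simp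
    then show ?thesis using True Cons.IH[OF Cons.prems(1,2)] Cons.prems(3) unfolding u_def by auto
  next
    case False
    then have step: "orthogonalize n (w#ws) acc = orthogonalize n ws (acc @ [u])" unfolding u_def by auto
    have nz: "cinner n u u \<noteq> 0" using False cinner_self_eq_0 by blast
    have orth_u: "\<forall>k<length acc. cinner n (acc!k) u = 0"
      unfolding u_def using cinner_residual[OF Cons.prems(1)] by blast
    have "cinner n u (acc!k) = 0" if "k < length acc" for k
      using orth_u that cinner_cnj[of n u "acc!k"] by simp
    with orth_u have orth: "orth_family n (acc @ [u])"
      using Cons.prems(1) nz unfolding orth_family_def by (auto simp: nth_append less_Suc_eq)
    have col: "\<forall>k<length (acc @ [u]). in_col_space n R ((acc @ [u]) ! k)"
      using Cons.prems(2,3) in_col_space_residual[of acc n R w] unfolding u_def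
      by (auto simp: nth_append less_Suc_eq)
    show ?thesis
      unfolding step using Cons.IH[OF orth col] Cons.prems(3) proj_fixes_snoc[OF orth_u]
        proj_fixes_snoc_residual[OF Cons.prems(1) nz u_def] by auto
  qed
qed simp

lemma bessel_inequality:
  fixes u :: "'s \<Rightarrow> nat \<Rightarrow> complex"
  assumes fin: "finite I" and nz: "\<And>s. s \<in> I \<Longrightarrow> cinner n (u s) (u s) \<noteq> 0"
    and orth: "\<And>s t. s \<in> I \<Longrightarrow> t \<in> I \<Longrightarrow> s \<noteq> t \<Longrightarrow> cinner n (u s) (u t) = 0"
  shows "(\<Sum>s\<in>I. cnj (cinner n w (u s)) * cinner n w (u s) / cinner n (u s) (u s)) \<le> cinner n w w"
proof -
  define c where "c = (\<lambda>s. cinner n w (u s) / cinner n (u s) (u s))"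
  define p where "p = (\<lambda>i. \<Sum>s\<in>I. c s * u s i)"
  define S where "S = (\<Sum>s\<in>I. cnj (cinner n w (u s)) * cinner n w (u s) / cinner n (u s) (u s))"
  have p_left: "cinner n p q = (\<Sum>s\<in>I. c s * cinner n (u s) q)" for q
    unfolding p_def by (rule cinner_sum_scale_left)
  have pw: "cinner n p w = S" unfolding p_left S_def c_def
    by (rule sum.cong[OF refl]) (simp add: cinner_cnj[of n "u _" w, symmetric])
  have "cnj S = S" unfolding S_def cnj_sum by (rule sum.cong[OF refl]) (simp add: cinner_self_real)
  then have wp: "cinner n w p = S" using pw cinner_cnj by metis
  have pu: "cinner n p (u t) = cinner n w (u t)" if t: "t \<in> I" for t
  proof -
    have "cinner n p (u t) = (\<Sum>s\<in>I. if s = t then c t * cinner n (u t) (u t) else 0)"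
      unfolding p_left by (rule sum.cong) (auto simp: orth t)
    also have "\<dots> = cinner n w (u t)" unfolding c_def using fin t nz[OF t] by simp
    finally show ?thesis .
  qed
  have pp: "cinner n p p = S"
    unfolding p_left S_def c_def using pu cinner_cnj by (intro sum.cong refl) (metis mult.commute times_divide_eq_left)
  have "0 \<le> cinner n (\<lambda>i. w i - p i) (\<lambda>i. w i - p i)" by (rule cinner_self_nonneg)
  also have "\<dots> = cinner n w w - S" by (simp add: cinner_diff_left cinner_diff_right pw wp pp)
  finally show ?thesis unfolding S_def by simp
qed

definition proj_matrix :: "nat \<Rightarrow> (nat \<Rightarrow> complex) list \<Rightarrow> complex mat" where
  "proj_matrix n us = mat n n (\<lambda>(i,l). \<Sum>k<length us. (us!k) i * cnj ((us!k) l) / cinner n (us!k) (us!k))"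

lemma qform_proj_matrix: "qform n (\<lambda>i l. proj_matrix n us $$ (i,l)) w =
   (\<Sum>k<length us. cnj (cinner n w (us!k)) * cinner n w (us!k) / cinner n (us!k) (us!k))"
proof -
  have "qform n (\<lambda>i l. proj_matrix n us $$ (i,l)) w =
     (\<Sum>i<n. \<Sum>l<n. \<Sum>k<length us. cnj (w i) * (us!k) i * (cnj ((us!k) l) * w l) / cinner n (us!k) (us!k))"
    unfolding qform_def proj_matrix_def by (simp add: sum_distrib_left sum_distrib_right ac_simps)
  also have "\<dots> = (\<Sum>k<length us. \<Sum>i<n. \<Sum>l<n. cnj (w i) * (us!k) i * (cnj ((us!k) l) * w l) / cinner n (us!k) (us!k))"
    by (subst sum.swap, rule sum.cong[OF refl], rule sum.swap)
  also have "\<dots> = (\<Sum>k<length us. cnj (cinner n w (us!k)) * cinner n w (us!k) / cinner n (us!k) (us!k))"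
    unfolding cinner_def cnj_sum sum_product by (simp add: sum_divide_distrib ac_simps)
  finally show ?thesis .
qed

lemma psd_proj_matrix: "psd n (proj_matrix n us)"
proof -
  have "0 \<le> x / N" if "0 \<le> x" "0 \<le> N" for x N :: complex
    using that by (auto simp: less_eq_complex_def Re_divide Im_divide)
  then show ?thesis unfolding psd_iff_psd_kernel psd_kernel_def qform_proj_matrix
    by (auto simp: proj_matrix_def intro!: sum_nonneg cinner_self_nonneg cnj_mult_self_nonneg)
qed

definition col_space_basis :: "nat \<Rightarrow> complex mat \<Rightarrow> (nat \<Rightarrow> complex) list" where
  "col_space_basis n R = orthogonalize n (map (\<lambda>j i. R $$ (i,j)) [0..<n]) []"

lemma col_space_basis:
  shows "orth_family n (col_space_basis n R)"
    and "\<forall>k<length (col_space_basis n R). in_col_space n R (col_space_basis n R ! k)"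
    and "\<forall>j<n. proj_fixes n (col_space_basis n R) (\<lambda>i. R $$ (i,j))"
proof -
  have "in_col_space n R (\<lambda>i. R $$ (i,j))" if "j < n" for j
    unfolding in_col_space_def using that
    by (intro exI[of _ "\<lambda>l. if l = j then 1 else 0"]) (simp add: if_distrib[of "\<lambda>x. _ * x"] cong: if_cong)
  then have "\<forall>w\<in>set (map (\<lambda>j i. R $$ (i,j)) [0..<n]). in_col_space n R w" by auto
  moreover have "orth_family n []" unfolding orth_family_def by simp
  ultimately show "orth_family n (col_space_basis n R)"
    "\<forall>k<length (col_space_basis n R). in_col_space n R (col_space_basis n R ! k)"
    "\<forall>j<n. proj_fixes n (col_space_basis n R) (\<lambda>i. R $$ (i,j))"
    unfolding col_space_basis_def using orthogonalize_invariant[of n "[]"] by auto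
qed

definition supp_proj :: "nat \<Rightarrow> complex mat \<Rightarrow> complex mat" where
  "supp_proj n R = proj_matrix n (col_space_basis n R)"

lemma supp_proj_carrier: "supp_proj n R \<in> carrier_mat n n"
  unfolding supp_proj_def proj_matrix_def by simp

lemma psd_supp_proj: "psd n (supp_proj n R)"
  unfolding supp_proj_def by (rule psd_proj_matrix)

lemma supp_proj_mult:
  assumes R: "R \<in> carrier_mat n n"
  shows "supp_proj n R * R = R"
proof (rule eq_matI)
  fix i j assume "i < dim_row R" "j < dim_col R"
  then have ij: "i < n" "j < n" using R by auto
  let ?us = "col_space_basis n R"
  have "(supp_proj n R * R) $$ (i,j) =
     (\<Sum>l<n. \<Sum>k<length ?us. R $$ (l,j) * cnj ((?us!k) l) / cinner n (?us!k) (?us!k) * (?us!k) i)"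
    using R ij unfolding supp_proj_def proj_matrix_def
    by (simp add: scalar_prod_def lessThan_atLeast0 sum_distrib_right sum_distrib_left ac_simps)
  also have "\<dots> = orth_proj n ?us (\<lambda>i. R $$ (i,j)) i"
    unfolding orth_proj_def gs_coeff_def cinner_def
    by (subst sum.swap) (simp add: sum_distrib_right sum_divide_distrib)
  also have "\<dots> = R $$ (i,j)" using col_space_basis(3) ij unfolding proj_fixes_def by simp
  finally show "(supp_proj n R * R) $$ (i,j) = R $$ (i,j)" .
qed (use R in \<open>simp_all add: supp_proj_def proj_matrix_def\<close>)

lemma cinner_eq_0_of_orth_supp:
  assumes "orth_supp n R R'" "R \<in> carrier_mat n n" "R' \<in> carrier_mat n n"
    and "in_col_space n R u" "in_col_space n R' u'"
  shows "cinner n u u' = 0"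
proof -
  obtain z z' where z: "\<forall>i<n. u i = (\<Sum>l<n. R $$ (i,l) * z l)" and z': "\<forall>i<n. u' i = (\<Sum>l<n. R' $$ (i,l) * z' l)"
    using assms(4,5) unfolding in_col_space_def by blast
  have "cinner n u u' = (R *\<^sub>v vec n z) \<bullet>c (R' *\<^sub>v vec n z')"
    unfolding cinner_def using z z' assms(2,3)
    by (auto simp: scalar_prod_def mult_mat_vec_def lessThan_atLeast0 intro!: sum.cong)
  also have "\<dots> = 0" using assms(1) unfolding orth_supp_def by simp
  finally show ?thesis .
qed

lemma qform_id: "qform n (\<lambda>i l. if i = l then 1 else 0) v = cinner n v v"
proof -
  have "cnj (v i) * (if i = l then 1 else 0) * v l = (if i = l then v i * cnj (v i) else 0)" for i l
    by simp
  then show ?thesis unfolding qform_def cinner_def by simp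
qed

text \<open>Bessel's inequality for the union of the orthogonal bases of all the supports.\<close>
lemma sum_qform_supp_proj_le:
  fixes R :: "nat \<Rightarrow> complex mat"
  assumes R: "\<forall>x<m. R x \<in> carrier_mat n n"
    and orth: "\<forall>x<m. \<forall>y<m. x \<noteq> y \<longrightarrow> orth_supp n (R x) (R y)"
  shows "(\<Sum>x<m. qform n (\<lambda>i l. supp_proj n (R x) $$ (i,l)) w) \<le> cinner n w w"
proof -
  define Us where "Us = (\<lambda>x. col_space_basis n (R x))"
  define I where "I = (SIGMA x:{..<m}. {..<length (Us x)})"
  define u where "u = (\<lambda>s. Us (fst s) ! snd s)"
  have "(\<Sum>x<m. qform n (\<lambda>i l. supp_proj n (R x) $$ (i,l)) w)
      = (\<Sum>s\<in>I. cnj (cinner n w (u s)) * cinner n w (u s) / cinner n (u s) (u s))"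
    unfolding supp_proj_def qform_proj_matrix I_def u_def Us_def by (simp add: sum.Sigma split_def)
  also have "\<dots> \<le> cinner n w w"
  proof (rule bessel_inequality)
    show "finite I" unfolding I_def by simp
    fix s assume "s \<in> I"
    then show "cinner n (u s) (u s) \<noteq> 0"
      using col_space_basis(1) unfolding I_def u_def Us_def orth_family_def by auto
  next
    fix s t assume st: "s \<in> I" "t \<in> I" "s \<noteq> t"
    obtain x k y k' where s: "s = (x,k)" and t: "t = (y,k')" by (cases s, cases t)
    show "cinner n (u s) (u t) = 0"
    proof (cases "x = y")
      case True
      then show ?thesis
        using col_space_basis(1) st s t unfolding I_def u_def Us_def orth_family_def by auto
    next
      case False
      then show ?thesis
        using st s t R orth col_space_basis(2) unfolding I_def u_def Us_def
        by (auto intro!: cinner_eq_0_of_orth_supp)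
    qed
  qed
  finally show ?thesis .
qed

lemma psd_one_minus_sum_supp_proj:
  fixes R :: "nat \<Rightarrow> complex mat"
  assumes "\<forall>x<m. R x \<in> carrier_mat n n" "\<forall>x<m. \<forall>y<m. x \<noteq> y \<longrightarrow> orth_supp n (R x) (R y)"
  shows "psd n (1\<^sub>m n - mat n n (\<lambda>(i,l). \<Sum>x<m. supp_proj n (R x) $$ (i,l)))"
  unfolding psd_iff_psd_kernel psd_kernel_def
proof (intro conjI allI)
  show "1\<^sub>m n - mat n n (\<lambda>(i,l). \<Sum>x<m. supp_proj n (R x) $$ (i,l)) \<in> carrier_mat n n"
    by (intro minus_carrier_mat) simp
  fix w
  have "qform n (\<lambda>i l. (1\<^sub>m n - mat n n (\<lambda>(i,l). \<Sum>x<m. supp_proj n (R x) $$ (i,l))) $$ (i,l)) w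
    = qform n (\<lambda>i l. (if i = l then 1 else 0) - (\<Sum>x<m. supp_proj n (R x) $$ (i,l))) w"
    unfolding qform_def by (intro sum.cong refl) simp
  also have "\<dots> = cinner n w w - (\<Sum>x<m. qform n (\<lambda>i l. supp_proj n (R x) $$ (i,l)) w)"
    unfolding qform_diff qform_id by (subst qform_sum) simp_all
  also have "\<dots> \<ge> 0" using sum_qform_supp_proj_le[OF assms] by simp
  finally show "qform n (\<lambda>i l. (1\<^sub>m n - mat n n (\<lambda>(i,l). \<Sum>x<m. supp_proj n (R x) $$ (i,l))) $$ (i,l)) w \<ge> 0" .
qed

lemma psd_one_minus_supp_proj:
  assumes "R \<in> carrier_mat n n"
  shows "psd n (1\<^sub>m n - supp_proj n R)"
proof -
  have "mat n n (\<lambda>(i,l). \<Sum>x<(1::nat). supp_proj n R $$ (i,l)) = supp_proj n R"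
    using supp_proj_carrier[of n R] by (intro eq_matI) auto
  moreover have "psd n (1\<^sub>m n - mat n n (\<lambda>(i,l). \<Sum>x<(1::nat). supp_proj n R $$ (i,l)))"
    by (rule psd_one_minus_sum_supp_proj) (use assms in auto)
  ultimately show ?thesis by simp
qed

section \<open>Measured bipartite states\<close>

lemma psd_one_minus_povm_elem:
  assumes P: "povm n m X" and x: "x < m"
  shows "psd n (1\<^sub>m n - X x)"
proof -
  have Xc: "\<forall>y<m. X y \<in> carrier_mat n n" by (rule povm_carrier[OF P])
  have "(1\<^sub>m n - X x) $$ (i,l) = (\<Sum>y\<in>{..<m} - {x}. X y $$ (i,l))" if "i < n" "l < n" for i l
    using P Xc x that unfolding povm_def by (auto simp: sum_diff1)
  then have "qform n (\<lambda>i l. (1\<^sub>m n - X x) $$ (i,l)) v = qform n (\<lambda>i l. \<Sum>y\<in>{..<m} - {x}. X y $$ (i,l)) v" for v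
    unfolding qform_def by (intro sum.cong refl) simp
  also have "\<dots> v = (\<Sum>y\<in>{..<m} - {x}. qform n (\<lambda>i l. X y $$ (i,l)) v)" for v by (rule qform_sum) simp
  finally show ?thesis
    using P Xc x unfolding povm_def psd_iff_psd_kernel psd_kernel_def by (auto intro!: sum_nonneg minus_carrier_mat)
qed

lemma ptrA_kron_mult_add_one_minus:
  assumes X: "X \<in> carrier_mat dA dA" and \<rho>: "\<rho> \<in> carrier_mat (dA*dB) (dA*dB)"
  shows "ptrA dA dB (kron X (1\<^sub>m dB) * \<rho>) + ptrA dA dB (kron (1\<^sub>m dA - X) (1\<^sub>m dB) * \<rho>) = ptrA dA dB \<rho>"
proof (rule eq_matI)
  fix i j assume "i < dim_row (ptrA dA dB \<rho>)" "j < dim_col (ptrA dA dB \<rho>)"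
  then have ij: "i < dB" "j < dB" by simp_all
  have X': "1\<^sub>m dA - X \<in> carrier_mat dA dA" using X by (rule minus_carrier_mat)
  have "(\<Sum>a<dA. \<Sum>a'<dA. X $$ (a,a') * \<rho> $$ (a'*dB+i, a*dB+j))
      + (\<Sum>a<dA. \<Sum>a'<dA. (1\<^sub>m dA - X) $$ (a,a') * \<rho> $$ (a'*dB+i, a*dB+j))
      = (\<Sum>a<dA. \<Sum>a'<dA. if a = a' then \<rho> $$ (a'*dB+i, a*dB+j) else 0)"
    unfolding sum.distrib[symmetric] using X by (intro sum.cong refl) (auto simp: algebra_simps)
  then show "(ptrA dA dB (kron X (1\<^sub>m dB) * \<rho>) + ptrA dA dB (kron (1\<^sub>m dA - X) (1\<^sub>m dB) * \<rho>)) $$ (i,j)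
      = ptrA dA dB \<rho> $$ (i,j)"
    using X X' \<rho> ij by (simp add: index_ptrA_kron_mult, simp add: ptrA_def)
qed simp_all

lemma ptrA_liftA_meas:
  assumes P: "povm dA m X" and \<rho>: "\<rho> \<in> carrier_mat (dA*dB) (dA*dB)"
  shows "ptrA m dB (liftA (meas m X) dA m dB \<rho>) = ptrA dA dB \<rho>"
proof (rule eq_matI)
  have Xc: "\<forall>x<m. X x \<in> carrier_mat dA dA" by (rule povm_carrier[OF P])
  fix i j assume "i < dim_row (ptrA dA dB \<rho>)" "j < dim_col (ptrA dA dB \<rho>)"
  then have ij: "i < dB" "j < dB" by simp_all
  have "ptrA m dB (liftA (meas m X) dA m dB \<rho>) $$ (i,j)
      = (\<Sum>x<m. \<Sum>a<dA. \<Sum>a'<dA. X x $$ (a,a') * \<rho> $$ (a'*dB+i, a*dB+j))"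
    unfolding liftA_meas_eq_block_diag[OF Xc \<rho>] ptrA_block_diag using Xc \<rho> ij
    by (simp add: index_ptrA_kron_mult)
  also have "\<dots> = (\<Sum>a<dA. \<Sum>a'<dA. (\<Sum>x<m. X x $$ (a,a')) * \<rho> $$ (a'*dB+i, a*dB+j))"
    by (simp add: sum_distrib_right sum.swap[of _ "{..<m}"])
  also have "\<dots> = ptrA dA dB \<rho> $$ (i,j)"
    using P ij unfolding povm_def ptrA_def by (simp add: if_distrib[of "\<lambda>x. x * _"] cong: if_cong)
  finally show "ptrA m dB (liftA (meas m X) dA m dB \<rho>) $$ (i,j) = ptrA dA dB \<rho> $$ (i,j)" .
qed simp_all

lemma density_ptrA:
  assumes "density (dA*dB) \<rho>"
  shows "density dB (ptrA dA dB \<rho>)"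
  using assms psd_ptrA mtrace_ptrA unfolding density_def psd_def by metis

lemma density_liftA_meas:
  assumes P: "povm dA m X" and \<rho>: "density (dA*dB) \<rho>"
  shows "density (m*dB) (liftA (meas m X) dA m dB \<rho>)"
proof -
  have \<rho>c: "\<rho> \<in> carrier_mat (dA*dB) (dA*dB)" using \<rho> unfolding density_def psd_def by auto
  have "psd (m*dB) (liftA (meas m X) dA m dB \<rho>)"
    using psd_liftA_meas P \<rho> unfolding povm_def density_def by blast
  moreover have "mtrace (liftA (meas m X) dA m dB \<rho>) = 1"
    using mtrace_ptrA[of "liftA (meas m X) dA m dB \<rho>" m dB] ptrA_liftA_meas[OF P \<rho>c]
      mtrace_ptrA[OF \<rho>c] \<rho> calculation unfolding density_def psd_def by auto
  ultimately show ?thesis unfolding density_def by blast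
qed

text \<open>Tr_A \<rho> splits block by block into the outcome parts Tr_A((X_x \<otimes> 1) \<rho>) and the
  positive remainders Tr_A(((1 - X_x) \<otimes> 1) \<rho>); dropping the remainders can only increase D.\<close>
lemma relK_measured_le_zero:
  assumes D: "relK b D" and P: "povm dA m X" and \<rho>: "density (dA*dB) \<rho>"
  shows "D (liftA (meas m X) dA m dB \<rho>) (kron (1\<^sub>m m) (ptrA dA dB \<rho>)) \<le> 0"
proof -
  let ?L = "liftA (meas m X) dA m dB \<rho>"
  define part where "part = (\<lambda>Y. ptrA dA dB (kron Y (1\<^sub>m dB) * \<rho>))"
  have \<rho>p: "psd (dA*dB) \<rho>" and \<rho>c: "\<rho> \<in> carrier_mat (dA*dB) (dA*dB)"
    using \<rho> unfolding density_def psd_def by auto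
  have Xc: "\<forall>x<m. X x \<in> carrier_mat dA dA" by (rule povm_carrier[OF P])
  have L: "?L = block_diag m dB (\<lambda>x. part (X x))"
    unfolding part_def by (rule liftA_meas_eq_block_diag[OF Xc \<rho>c])
  have "kron (1\<^sub>m m) (ptrA dA dB \<rho>) = block_diag m dB (\<lambda>_. ptrA dA dB \<rho>)"
    by (rule kron_one_eq_block_diag) simp
  also have "\<dots> = block_diag m dB (\<lambda>x. part (X x) + part (1\<^sub>m dA - X x))"
    unfolding part_def using Xc \<rho>c by (intro block_diag_cong) (simp add: ptrA_kron_mult_add_one_minus)
  also have "\<dots> = ?L + block_diag m dB (\<lambda>x. part (1\<^sub>m dA - X x))"
    unfolding L part_def by (rule block_diag_add[symmetric]) (simp add: ptrA_def)
  moreover have "psd (m*dB) ?L" using psd_liftA_meas P \<rho>p unfolding povm_def by blast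
  moreover have "psd (m*dB) (block_diag m dB (\<lambda>x. part (1\<^sub>m dA - X x)))"
    unfolding part_def using psd_one_minus_povm_elem[OF P] \<rho>p
    by (simp add: psd_block_diag psd_ptrA_kron_mult)
  ultimately have "D ?L (kron (1\<^sub>m m) (ptrA dA dB \<rho>)) \<le> D ?L ?L"
    using relK_antimono_right[OF D] by simp
  also have "D ?L ?L = 0" using D density_liftA_meas[OF P \<rho>] unfolding relK_def by blast
  finally show ?thesis .
qed

lemma sum_mtrace_supp_proj_mult_le:
  fixes R :: "nat \<Rightarrow> complex mat"
  assumes R: "\<forall>x<m. R x \<in> carrier_mat n n" and orth: "\<forall>x<m. \<forall>y<m. x \<noteq> y \<longrightarrow> orth_supp n (R x) (R y)"
    and \<sigma>: "density n \<sigma>"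
  shows "(\<Sum>x<m. mtrace (supp_proj n (R x) * \<sigma>)) \<le> 1"
proof -
  define S where "S = mat n n (\<lambda>(i,l). \<Sum>x<m. supp_proj n (R x) $$ (i,l))"
  have \<sigma>p: "psd n \<sigma>" and \<sigma>c: "\<sigma> \<in> carrier_mat n n" using \<sigma> unfolding density_def psd_def by auto
  have Sc: "S \<in> carrier_mat n n" unfolding S_def by simp
  have "(\<Sum>x<m. mtrace (supp_proj n (R x) * \<sigma>)) = mtrace (S * \<sigma>)"
    unfolding mtrace_mult[OF Sc \<sigma>c] using \<sigma>c supp_proj_carrier
    by (simp add: mtrace_mult[of "supp_proj n _" n] S_def sum_distrib_right sum.swap[of _ "{..<m}"])
  also have "\<dots> \<le> mtrace \<sigma>"
    using mtrace_mult_psd_nonneg[OF psd_one_minus_sum_supp_proj[OF R orth] \<sigma>p]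
      mtrace_one_minus_mult[OF Sc \<sigma>c] unfolding S_def by simp
  also have "\<dots> = 1" using \<sigma> unfolding density_def by simp
  finally show ?thesis .
qed

text \<open>The test is the block-diagonal projector onto the supports of the outcome parts;
  their orthogonality makes its overlap with 1 \<otimes> \<sigma> at most Tr \<sigma> = 1.\<close>
lemma relK_measured_nonneg:
  assumes D: "relK b D" and b: "b > 1" and P: "povm dA m X" and \<rho>: "density (dA*dB) \<rho>"
    and orth: "\<forall>j<m. \<forall>k<m. j \<noteq> k \<longrightarrow>
        orth_supp dB (ptrA dA dB (kron (X j) (1\<^sub>m dB) * \<rho>)) (ptrA dA dB (kron (X k) (1\<^sub>m dB) * \<rho>))"
    and \<sigma>: "density dB \<sigma>"
  shows "D (liftA (meas m X) dA m dB \<rho>) (kron (1\<^sub>m m) \<sigma>) \<ge> 0"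
proof -
  define R where "R = (\<lambda>x. ptrA dA dB (kron (X x) (1\<^sub>m dB) * \<rho>))"
  have \<rho>c: "\<rho> \<in> carrier_mat (dA*dB) (dA*dB)" using \<rho> unfolding density_def psd_def by auto
  have \<sigma>p: "psd dB \<sigma>" and \<sigma>c: "\<sigma> \<in> carrier_mat dB dB" using \<sigma> unfolding density_def psd_def by auto
  have Rc: "\<forall>x<m. R x \<in> carrier_mat dB dB" unfolding R_def by simp
  have L: "liftA (meas m X) dA m dB \<rho> = block_diag m dB R"
    unfolding R_def by (rule liftA_meas_eq_block_diag[OF povm_carrier[OF P] \<rho>c])
  have K: "kron (1\<^sub>m m) \<sigma> = block_diag m dB (\<lambda>_. \<sigma>)" by (rule kron_one_eq_block_diag[OF \<sigma>c])
  have "D (block_diag m dB R) (block_diag m dB (\<lambda>_. \<sigma>)) \<ge> 0"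
  proof (rule relK_nonneg_of_test[OF D b])
    show "density (m*dB) (block_diag m dB R)" using density_liftA_meas[OF P \<rho>] L by simp
    show "psd (m*dB) (block_diag m dB (\<lambda>_. \<sigma>))" using \<sigma>p by (simp add: psd_block_diag)
    show "psd (m*dB) (block_diag m dB (\<lambda>x. supp_proj dB (R x)))" by (simp add: psd_block_diag psd_supp_proj)
    show "psd (m*dB) (1\<^sub>m (m*dB) - block_diag m dB (\<lambda>x. supp_proj dB (R x)))"
      using Rc by (simp add: one_minus_block_diag supp_proj_carrier psd_block_diag psd_one_minus_supp_proj)
    have "mtrace (block_diag m dB (\<lambda>x. supp_proj dB (R x)) * block_diag m dB R) = mtrace (block_diag m dB R)"
      using Rc by (simp add: mtrace_mult_block_diag supp_proj_carrier supp_proj_mult mtrace_block_diag)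
    then show "mtrace (block_diag m dB (\<lambda>x. supp_proj dB (R x)) * block_diag m dB R) = 1"
      using density_liftA_meas[OF P \<rho>] L unfolding density_def by simp
    show "mtrace (block_diag m dB (\<lambda>x. supp_proj dB (R x)) * block_diag m dB (\<lambda>_. \<sigma>)) \<le> 1"
      using \<sigma>c Rc sum_mtrace_supp_proj_mult_le[OF Rc _ \<sigma>] orth
      by (simp add: mtrace_mult_block_diag supp_proj_carrier R_def)
  qed
  then show ?thesis using L K by simp
qed

lemma HK_nonneg:
  assumes "density k (ptrA m k \<rho>)" and "D \<rho> (kron (1\<^sub>m m) (ptrA m k \<rho>)) \<le> 0"
  shows "HK first D m k \<rho> \<ge> 0"
proof (cases first)
  case False
  have "0 \<le> - D \<rho> (kron (1\<^sub>m m) (ptrA m k \<rho>))" using assms(2) by simp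
  also have "\<dots> \<le> (SUP \<sigma> \<in> {\<sigma>. density k \<sigma>}. - D \<rho> (kron (1\<^sub>m m) \<sigma>))"
    by (rule SUP_upper) (use assms(1) in simp)
  finally show ?thesis unfolding HK_def using False by simp
qed (use assms in \<open>simp add: HK_def\<close>)

lemma HK_nonpos:
  assumes "density k (ptrA m k \<rho>)" and "\<And>\<sigma>. density k \<sigma> \<Longrightarrow> D \<rho> (kron (1\<^sub>m m) \<sigma>) \<ge> 0"
  shows "HK first D m k \<rho> \<le> 0"
  unfolding HK_def using assms by (auto intro: SUP_least)

theorem lemma10:
  fixes b :: real and D :: "complex mat \<Rightarrow> complex mat \<Rightarrow> ereal" and first :: bool
    and dA dB m :: nat and X :: "nat \<Rightarrow> complex mat" and \<rho> :: "complex mat"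
  assumes "b > 1"
    and "relK b D"
    and "povm dA m X"
    and "density (dA * dB) \<rho>"
  shows "HK first D m dB (liftA (meas m X) dA m dB \<rho>) \<ge> 0 \<and>
    ((\<forall>j<m. \<forall>k<m. j \<noteq> k \<longrightarrow>
        orth_supp dB (ptrA dA dB (kron (X j) (1\<^sub>m dB) * \<rho>))
                     (ptrA dA dB (kron (X k) (1\<^sub>m dB) * \<rho>)))
     \<longrightarrow> HK first D m dB (liftA (meas m X) dA m dB \<rho>) = 0)"
proof -
  have marginal: "ptrA m dB (liftA (meas m X) dA m dB \<rho>) = ptrA dA dB \<rho>"
    using assms(4) unfolding density_def psd_def by (intro ptrA_liftA_meas[OF assms(3)]) auto
  have B: "density dB (ptrA m dB (liftA (meas m X) dA m dB \<rho>))"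
    unfolding marginal by (rule density_ptrA[OF assms(4)])
  have "HK first D m dB (liftA (meas m X) dA m dB \<rho>) \<ge> 0"
    by (rule HK_nonneg[OF B]) (use relK_measured_le_zero[OF assms(2-4)] marginal in simp)
  moreover have "HK first D m dB (liftA (meas m X) dA m dB \<rho>) \<le> 0"
    if "\<forall>j<m. \<forall>k<m. j \<noteq> k \<longrightarrow> orth_supp dB (ptrA dA dB (kron (X j) (1\<^sub>m dB) * \<rho>))
                                           (ptrA dA dB (kron (X k) (1\<^sub>m dB) * \<rho>))"
    by (rule HK_nonpos[OF B]) (rule relK_measured_nonneg[OF assms(2,1,3,4) that])
  ultimately show ?thesis by auto
qed

end
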